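(* For $\lambda\in P^+$ and all $(\mathbf i',\mathbf i)\in\mathbf I^{r-1}\times\mathbf I^r$, $W(\lambda)^{\ge(\mathbf i',\mathbf i)}=\mathbf U(\mathfrak n^-[t])^{\ge(\mathbf i',\mathbf i)}w_\lambda$ and $W(\lambda)^{>(\mathbf i',\mathbf i)}=\mathbf U(\mathfrak n^-[t])^{>(\mathbf i',\mathbf i)}w_\lambda$.
   Context: $\mathfrak g=\mathfrak{sp}_{2r}$: complex matrices $(a_{i,j})$, indices $1,\dots,r,-r,\dots,-1$, $a_{i,j}=-\mathrm{sgn}(i)\mathrm{sgn}(j)a_{-j,-i}$; $\mathfrak h$ spanned by $E_{i,i}-E_{-i,-i}$, dual basis $\varepsilon_i$. Root vectors: $x^+_{i,j-1}=E_{i,j}-E_{-j,-i}$, $x^-_{i,j-1}=E_{j,i}-E_{-i,-j}$, $x^+_{i,\overline j}=E_{i,-j}+E_{j,-i}$, $x^-_{i,\overline j}=E_{-j,i}+E_{-i,j}$ ($1\le i<j\le r$), $x^+_{i,\overline i}=E_{i,-i}$, $x^-_{i,\overline i}=E_{-i,i}$, $x^\pm_{i,r}:=x^\pm_{i,\overline r}$; $\mathfrak n^\pm$ spanned by $x^\pm_{i,j}$ ($1\le i\le j<r$), $x^\pm_{i,\overline j}$ ($1\le i\le j\le r$). $\mathfrak n^-_{r-1}$ is spanned by $x^-_{i,j}$ ($1\le i\le j<r-1$) and $x^-_{i,\overline j}$ ($1\le i\le j\le r-1$). $\omega_i=\varepsilon_1+\dots+\varepsilon_i$, $P^+=\sum\mathbb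 N\omega_i$. $\mathfrak a[t]=\mathfrak a\otimes\mathbb C[t]$. For $\lambda=\sum m_i\omega_i$, $W(\lambda)$ is the cyclic $\mathfrak g[t]$-module generated by $w_\lambda$ with $\mathfrak n^+[t]w_\lambda=0$, $(h\otimes t^s)w_\lambda=\langle\lambda,h\rangle\delta_{s,0}w_\lambda$, $(x^-_{i,i})^{m_i+1}w_\lambda=0$. $\mathfrak g_{r-1}\cong\mathfrak{sp}_{2r-2}$ is the subalgebra of matrices whose rows and columns indexed $\pm r$ vanish. $\mathbf F$: pairs $(\ell,\mathbf s)$, $\ell\in\mathbb N$, $\mathbf s=(\mathbf s(1)\le\dots\le\mathbf s(\ell))\in\mathbb N^\ell$, $|\mathbf s|=\sum_p\mathbf s(p)$; $\mathbf F^j$ its $j$-fold product, elements written $(\underline\ell,\underline{\mathbf s})$ with $|\underline{\mathbf s}|=(|\mathbf s_1|,\dots,|\mathbf s_j|)$. $\mathbf x(\ell,\mathbf s)=(x\otimes t^{\mathbf s(1)})\cdots(x\otimes t^{\mathbf s(\ell)})$ ($=1$ if $\ell=0$), $\mathbf x^-_j(\underline\ell,\underline{\mathbf s})=\mathbf x^-_{1,j}(\ell_1,\mathbf s_1)\cdots\mathbf x^-_{j,j}(\ell_j,\mathbf s_j)$. $\mathbf I^m=\mathbb N^m\times\mathbb N^m$ ordered by: $\underline\ell\vartriangleright\underline m$ if at the first index where they differ $\ell_s<m_s$; $\underline d\blacktriangleright\underline e$ if at the last index where they differ $d_s>e_s$; $(\underline\ell,\underline d)>(\underline m,\underline e)$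 iff $\underline\ell\vartriangleright\underline m$ or ($\underline\ell=\underline m$ and $\underline d\blacktriangleright\underline e$). On $\mathbf I^{r-1}\times\mathbf I^r$: $(\underline\ell',\underline d',\underline\ell,\underline d)>(\underline m',\underline e',\underline m,\underline e)$ iff $(\underline\ell,\underline d)>(\underline m,\underline e)$, or equal and $(\underline\ell',\underline d')>(\underline m',\underline e')$. $W(\lambda)^{\ge(\mathbf i',\mathbf i)}$ (resp. $>$) is the sum of $\mathbf U(\mathfrak g_{r-1}[t])\mathbf x^-_{r-1}(\underline\ell',\underline{\mathbf s}')\mathbf x^-_r(\underline\ell,\underline{\mathbf s})w_\lambda$, and $\mathbf U(\mathfrak n^-[t])^{\ge(\mathbf i',\mathbf i)}$ (resp. $>$) is the sum of $\mathbf U(\mathfrak n^-_{r-1}[t])\mathbf x^-_{r-1}(\underline\ell',\underline{\mathbf s}')\mathbf x^-_r(\underline\ell,\underline{\mathbf s})$, both over $(\underline\ell',\underline{\mathbf s}',\underline\ell,\underline{\mathbf s})\in\mathbf F^{r-1}\times\mathbf F^r$ with $(\underline\ell',|\underline{\mathbf s}'|,\underline\ell,|\underline{\mathbf s}|)\ge(\mathbf i',\mathbf i)$ (resp. $>$). *)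

theory Defs
  imports Complex_Main "HOL-Library.Function_Algebras"
begin

section \<open>The Lie algebra sp_2r as matrices indexed by 1..r, -r..-1\<close>

type_synonym mat = "int \<Rightarrow> int \<Rightarrow> complex"

definition Idx :: "nat \<Rightarrow> int set" where
  "Idx r = {1..int r} \<union> {- int r..-1}"

definition msc :: "complex \<Rightarrow> mat \<Rightarrow> mat" where
  "msc c A = (\<lambda>i j. c * A i j)"

definition mspan :: "mat set \<Rightarrow> mat set" where
  "mspan S = module.span msc S"

definition mmul :: "nat \<Rightarrow> mat \<Rightarrow> mat \<Rightarrow> mat" where
  "mmul r A B = (\<lambda>i j. \<Sum>k\<in>Idx r. A i k * B k j)"

definition bracket :: "nat \<Rightarrow> mat \<Rightarrow> mat \<Rightarrow> mat" where
  "bracket r A B = mmul r A B - mmul r B A"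

definition sp :: "nat \<Rightarrow> mat set" where
  "sp r = {A. (\<forall>i j. (i \<notin> Idx r \<or> j \<notin> Idx r) \<longrightarrow> A i j = 0) \<and>
              (\<forall>i\<in>Idx r. \<forall>j\<in>Idx r. A i j = - of_int (sgn i * sgn j) * A (-j) (-i))}"

definition E :: "int \<Rightarrow> int \<Rightarrow> mat" where
  "E p q = (\<lambda>i j. if i = p \<and> j = q then 1 else 0)"

text \<open>Root vectors: xp_ij i j = x^+_{i,j} = E_{i,j+1} - E_{-(j+1),-i}, xp_bar i j = x^+_{i,bar j}, etc.\<close>

definition xp_ij :: "nat \<Rightarrow> nat \<Rightarrow> mat" where
  "xp_ij i j = E (int i) (int j + 1) - E (-(int j + 1)) (- int i)"

definition xm_ij :: "nat \<Rightarrow> nat \<Rightarrow> mat" where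
  "xm_ij i j = E (int j + 1) (int i) - E (- int i) (-(int j + 1))"

definition xp_bar :: "nat \<Rightarrow> nat \<Rightarrow> mat" where
  "xp_bar i j = (if i = j then E (int i) (- int i)
                 else E (int i) (- int j) + E (int j) (- int i))"

definition xm_bar :: "nat \<Rightarrow> nat \<Rightarrow> mat" where
  "xm_bar i j = (if i = j then E (- int i) (int i)
                 else E (- int j) (int i) + E (- int i) (int j))"

text \<open>x^-_{i,j} with the convention x^-_{i,r} := x^-_{i,bar r}.\<close>
definition xminus :: "nat \<Rightarrow> nat \<Rightarrow> nat \<Rightarrow> mat" where
  "xminus r i j = (if j < r then xm_ij i j else xm_bar i r)"

definition nplus :: "nat \<Rightarrow> mat set" where
  "nplus r = mspan ({xp_ij i j | i j. 1 \<le> i \<and> i \<le> j \<and> j < r} \<union>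
                    {xp_bar i j | i j. 1 \<le> i \<and> i \<le> j \<and> j \<le> r})"

definition nminus_red :: "nat \<Rightarrow> mat set" where
  "nminus_red r = mspan ({xm_ij i j | i j. 1 \<le> i \<and> i \<le> j \<and> j < r - 1} \<union>
                         {xm_bar i j | i j. 1 \<le> i \<and> i \<le> j \<and> j \<le> r - 1})"

definition g_red :: "nat \<Rightarrow> mat set" where
  "g_red r = {A \<in> sp r. \<forall>i j. (i \<in> {int r, - int r} \<or> j \<in> {int r, - int r}) \<longrightarrow> A i j = 0}"

definition cartan :: "nat \<Rightarrow> mat set" where
  "cartan r = mspan {E (int i) (int i) - E (- int i) (- int i) | i. 1 \<le> i \<and> i \<le> r}"

text \<open>Pairing of lambda = sum m_i omega_i = sum_j (sum_{i>=j} m_i) eps_j with h in the Cartan.\<close>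
definition wt :: "nat \<Rightarrow> (nat \<Rightarrow> nat) \<Rightarrow> mat \<Rightarrow> complex" where
  "wt r m h = (\<Sum>j=1..r. of_nat (\<Sum>i=j..r. m i) * h (int j) (int j))"

text \<open>act x s v is the action of x \<otimes> t^s on v.\<close>
definition is_rep :: "nat \<Rightarrow> (complex \<Rightarrow> 'v::ab_group_add \<Rightarrow> 'v) \<Rightarrow> (mat \<Rightarrow> nat \<Rightarrow> 'v \<Rightarrow> 'v) \<Rightarrow> bool" where
  "is_rep r smult act \<longleftrightarrow>
     vector_space smult \<and>
     (\<forall>x\<in>sp r. \<forall>s. Vector_Spaces.linear smult smult (act x s)) \<and>
     (\<forall>x\<in>sp r. \<forall>y\<in>sp r. \<forall>s v. act (x + y) s v = act x s v + act y s v) \<and>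
     (\<forall>x\<in>sp r. \<forall>c s v. act (msc c x) s v = smult c (act x s v)) \<and>
     (\<forall>x\<in>sp r. \<forall>y\<in>sp r. \<forall>a b v.
        act x a (act y b v) - act y b (act x a v) = act (bracket r x y) (a + b) v)"

text \<open>U(a[t]) X: the smallest subspace containing X stable under all x \<otimes> t^s, x in a.\<close>
definition gen_sub :: "(complex \<Rightarrow> 'v::ab_group_add \<Rightarrow> 'v) \<Rightarrow> (mat \<Rightarrow> nat \<Rightarrow> 'v \<Rightarrow> 'v)
                        \<Rightarrow> mat set \<Rightarrow> 'v set \<Rightarrow> 'v set" where
  "gen_sub smult act A X =
     \<Inter>{M. X \<subseteq> M \<and> module.subspace smult M \<and> (\<forall>x\<in>A. \<forall>s. \<forall>u\<in>M. act x s u \<in> M)}"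

text \<open>w satisfies the defining relations of the local Weyl module W(lambda) and generates the module.\<close>
definition weyl_vec :: "nat \<Rightarrow> (nat \<Rightarrow> nat) \<Rightarrow> (complex \<Rightarrow> 'v::ab_group_add \<Rightarrow> 'v)
                         \<Rightarrow> (mat \<Rightarrow> nat \<Rightarrow> 'v \<Rightarrow> 'v) \<Rightarrow> 'v \<Rightarrow> bool" where
  "weyl_vec r m smult act w \<longleftrightarrow>
     (\<forall>x\<in>nplus r. \<forall>s. act x s w = 0) \<and>
     (\<forall>h\<in>cartan r. \<forall>s. act h s w = (if s = 0 then smult (wt r m h) w else 0)) \<and>
     (\<forall>i\<in>{1..r}. (act (xminus r i i) 0 ^^ (m i + 1)) w = 0) \<and>
     gen_sub smult act (sp r) {w} = UNIV"

text \<open>x(l,s) v = (x\<otimes>t^{s(1)}) ... (x\<otimes>t^{s(l)}) v, with s a sorted list of length l.\<close>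
definition xpow :: "(mat \<Rightarrow> nat \<Rightarrow> 'v \<Rightarrow> 'v) \<Rightarrow> mat \<Rightarrow> nat list \<Rightarrow> 'v \<Rightarrow> 'v" where
  "xpow act x ss v = foldr (\<lambda>s u. act x s u) ss v"

text \<open>x^-_j(S) v = x^-_{1,j}(S 1) ... x^-_{j,j}(S j) v.\<close>
definition xmono :: "nat \<Rightarrow> (mat \<Rightarrow> nat \<Rightarrow> 'v \<Rightarrow> 'v) \<Rightarrow> nat \<Rightarrow> (nat \<Rightarrow> nat list) \<Rightarrow> 'v \<Rightarrow> 'v" where
  "xmono r act j S v = foldr (\<lambda>k u. xpow act (xminus r k j) (S k) u) [1..<j+1] v"

definition lgt :: "nat \<Rightarrow> (nat \<Rightarrow> nat) \<Rightarrow> (nat \<Rightarrow> nat) \<Rightarrow> bool" where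
  "lgt n l l' \<longleftrightarrow> (\<exists>s\<in>{1..n}. (\<forall>q\<in>{1..<s}. l q = l' q) \<and> l s < l' s)"

definition dgt :: "nat \<Rightarrow> (nat \<Rightarrow> nat) \<Rightarrow> (nat \<Rightarrow> nat) \<Rightarrow> bool" where
  "dgt n d e \<longleftrightarrow> (\<exists>s\<in>{1..n}. (\<forall>q\<in>{s<..n}. d q = e q) \<and> e s < d s)"

definition eqon :: "nat \<Rightarrow> (nat \<Rightarrow> nat) \<Rightarrow> (nat \<Rightarrow> nat) \<Rightarrow> bool" where
  "eqon n f g \<longleftrightarrow> (\<forall>q\<in>{1..n}. f q = g q)"

type_synonym idx = "(nat \<Rightarrow> nat) \<times> (nat \<Rightarrow> nat)"

definition Igt :: "nat \<Rightarrow> idx \<Rightarrow> idx \<Rightarrow> bool" where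
  "Igt n a b \<longleftrightarrow> lgt n (fst a) (fst b) \<or> (eqon n (fst a) (fst b) \<and> dgt n (snd a) (snd b))"

definition Ieq :: "nat \<Rightarrow> idx \<Rightarrow> idx \<Rightarrow> bool" where
  "Ieq n a b \<longleftrightarrow> eqon n (fst a) (fst b) \<and> eqon n (snd a) (snd b)"

definition IIgt :: "nat \<Rightarrow> idx \<times> idx \<Rightarrow> idx \<times> idx \<Rightarrow> bool" where
  "IIgt r p q \<longleftrightarrow> Igt r (snd p) (snd q) \<or> (Ieq r (snd p) (snd q) \<and> Igt (r - 1) (fst p) (fst q))"

definition IIeq :: "nat \<Rightarrow> idx \<times> idx \<Rightarrow> idx \<times> idx \<Rightarrow> bool" where
  "IIeq r p q \<longleftrightarrow> Ieq r (snd p) (snd q) \<and> Ieq (r - 1) (fst p) (fst q)"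

definition IIge :: "nat \<Rightarrow> idx \<times> idx \<Rightarrow> idx \<times> idx \<Rightarrow> bool" where
  "IIge r p q \<longleftrightarrow> IIgt r p q \<or> IIeq r p q"

text \<open>(l, |s|) of an element of F^n\<close>
definition shape :: "(nat \<Rightarrow> nat list) \<Rightarrow> idx" where
  "shape S = (\<lambda>k. length (S k), \<lambda>k. sum_list (S k))"

text \<open>generators x^-_{r-1}(l',s') x^-_r(l,s) w with (l',|s'|,l,|s|) satisfying P\<close>
definition gens :: "nat \<Rightarrow> (mat \<Rightarrow> nat \<Rightarrow> 'v \<Rightarrow> 'v) \<Rightarrow> 'v \<Rightarrow> (idx \<times> idx \<Rightarrow> bool) \<Rightarrow> 'v set" where
  "gens r act w P = {xmono r act (r - 1) S' (xmono r act r S w) | S' S.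
      (\<forall>k\<in>{1..r-1}. sorted (S' k)) \<and> (\<forall>k\<in>{1..r}. sorted (S k)) \<and> P (shape S', shape S)}"

text \<open>W(lambda)^{>= i} and U(n^-[t])^{>= i} w (and strict versions)\<close>
definition W_filt :: "nat \<Rightarrow> (complex \<Rightarrow> 'v::ab_group_add \<Rightarrow> 'v) \<Rightarrow> (mat \<Rightarrow> nat \<Rightarrow> 'v \<Rightarrow> 'v) \<Rightarrow> 'v
                      \<Rightarrow> (idx \<times> idx \<Rightarrow> bool) \<Rightarrow> 'v set" where
  "W_filt r smult act w P = gen_sub smult act (g_red r) (gens r act w P)"

definition U_filt_w :: "nat \<Rightarrow> (complex \<Rightarrow> 'v::ab_group_add \<Rightarrow> 'v) \<Rightarrow> (mat \<Rightarrow> nat \<Rightarrow> 'v \<Rightarrow> 'v) \<Rightarrow> 'v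
                      \<Rightarrow> (idx \<times> idx \<Rightarrow> bool) \<Rightarrow> 'v set" where
  "U_filt_w r smult act w P = gen_sub smult act (nminus_red r) (gens r act w P)"

end

(* Since n^-_{r-1} is contained in g_{r-1}, one inclusion is clear, and the other amounts to
   the stability of N = U(n^-_{r-1}[t])^{>=(i',i)} w under g_{r-1}[t].  The algebra g_{r-1}
   is spanned by n^-_{r-1} and its Borel part b (the h_j and the positive root vectors), and
   [b, n^-_{r-1}] lies in g_{r-1}; an induction over N therefore reduces everything to showing
   that b[t] maps each generator x^-_{r-1}(l',s') x^-_r(l,s) w into N.

   The x^-_{k,r-1} commute with each other, as do the x^-_{k,r}, so a generator is an arbitrary
   word in these letters applied to w.  An element of b[t] is moved to the right through the
   word, and at the end it kills or rescales w.  Each commutator met on the way either keeps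
   the letters and raises their degrees (Cartan elements), or replaces a letter by one of larger
   index or removes letters, which makes (l',l) strictly larger in the order, or creates an
   element of n^-_{r-1}[t] in front of such a word.  In each case the result lies in N. *)

theory Submission
  imports Defs "HOL-Library.Multiset"
begin

section \<open>Root vectors of sp(2r) and their brackets\<close>

lemma Idx_iff: "x \<in> Idx r \<longleftrightarrow> (1 \<le> x \<and> x \<le> int r) \<or> (- int r \<le> x \<and> x \<le> -1)"
  by (auto simp: Idx_def)

lemma finite_Idx [simp]: "finite (Idx r)"
  by (simp add: Idx_def)

lemma mmul_E: "mmul r (E a b) (E c d) = (if b = c \<and> b \<in> Idx r then E a d else 0)"
proof (intro ext)
  fix i j
  have "mmul r (E a b) (E c d) i j =
      (\<Sum>k\<in>Idx r. if k = b then (if i = a \<and> b = c \<and> j = d then 1 else 0) else 0)"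
    unfolding mmul_def E_def by (rule sum.cong) auto
  then show "mmul r (E a b) (E c d) i j = (if b = c \<and> b \<in> Idx r then E a d else 0) i j"
    by (auto simp: E_def)
qed

lemma mmul_add_left: "mmul r (A + B) C = mmul r A C + mmul r B C"
  and mmul_add_right: "mmul r C (A + B) = mmul r C A + mmul r C B"
  and mmul_diff_left: "mmul r (A - B) C = mmul r A C - mmul r B C"
  and mmul_diff_right: "mmul r C (A - B) = mmul r C A - mmul r C B"
  and mmul_msc_left: "mmul r (msc c A) C = msc c (mmul r A C)"
  and mmul_msc_right: "mmul r C (msc c A) = msc c (mmul r C A)"
  by (auto simp: mmul_def msc_def fun_eq_iff algebra_simps sum.distrib sum_subtractf sum_distrib_left)

lemmas mmul_simps = mmul_E mmul_add_left mmul_add_right mmul_diff_left mmul_diff_right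
  mmul_msc_left mmul_msc_right

definition hdiag :: "nat \<Rightarrow> mat" where
  "hdiag j = E (int j) (int j) - E (- int j) (- int j)"

(* The root vectors x^-_{k,r-1}, x^-_{k,r} and x^+_{k,r-1}.  They are constants rather than
   abbreviations so that the simplifier does not rewrite r - 1 to r - Suc 0 inside them. *)

definition xm_pen :: "nat \<Rightarrow> nat \<Rightarrow> mat" where
  "xm_pen r k = xm_ij k (r - 1)"

definition xm_last :: "nat \<Rightarrow> nat \<Rightarrow> mat" where
  "xm_last r k = xm_bar k r"

definition xp_pen :: "nat \<Rightarrow> nat \<Rightarrow> mat" where
  "xp_pen r k = xp_ij k (r - 1)"

lemmas bracket_calc = bracket_def mmul_simps Idx_iff xm_ij_def xm_bar_def xp_ij_def xp_bar_def
  hdiag_def xm_pen_def xm_last_def xp_pen_def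

lemma bracket_xm_pen_xm_pen:
  "1 \<le> k \<Longrightarrow> k < r \<Longrightarrow> 1 \<le> k' \<Longrightarrow> k' < r \<Longrightarrow> bracket r (xm_pen r k) (xm_pen r k') = 0"
  by (simp add: bracket_calc; auto simp: fun_eq_iff E_def)

lemma bracket_xm_last_xm_last:
  "1 \<le> k \<Longrightarrow> k \<le> r \<Longrightarrow> 1 \<le> k' \<Longrightarrow> k' \<le> r \<Longrightarrow> bracket r (xm_last r k) (xm_last r k') = 0"
  by (simp add: bracket_calc; auto simp: fun_eq_iff E_def)

lemma bracket_hdiag_xm_pen:
  "1 \<le> j \<Longrightarrow> j < r \<Longrightarrow> 1 \<le> k \<Longrightarrow> k < r \<Longrightarrow>
   bracket r (hdiag j) (xm_pen r k) = (if j = k then msc (-1) (xm_pen r k) else 0)"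
  by (simp add: bracket_calc; auto simp: fun_eq_iff E_def msc_def)

lemma bracket_hdiag_xm_last:
  "1 \<le> j \<Longrightarrow> j \<le> r \<Longrightarrow> 1 \<le> k \<Longrightarrow> k \<le> r \<Longrightarrow>
   bracket r (hdiag j) (xm_last r k) =
     msc (if j = r then (if k = r then -2 else -1) else (if j = k then -1 else 0)) (xm_last r k)"
  by (simp add: bracket_calc; auto simp: fun_eq_iff E_def msc_def)

lemma bracket_xp_ij_xm_pen:
  "1 \<le> a \<Longrightarrow> a \<le> b \<Longrightarrow> b + 1 < r \<Longrightarrow> 1 \<le> k \<Longrightarrow> k < r \<Longrightarrow>
   bracket r (xp_ij a b) (xm_pen r k) = (if k = a then msc (-1) (xm_pen r (b + 1)) else 0)"
  by (simp add: bracket_calc; auto simp: fun_eq_iff E_def msc_def)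

lemma bracket_xp_ij_xm_last:
  "1 \<le> a \<Longrightarrow> a \<le> b \<Longrightarrow> b + 1 < r \<Longrightarrow> 1 \<le> k \<Longrightarrow> k \<le> r \<Longrightarrow>
   bracket r (xp_ij a b) (xm_last r k) = (if k = a then msc (-1) (xm_last r (b + 1)) else 0)"
  by (simp add: bracket_calc; auto simp: fun_eq_iff E_def msc_def)

lemma bracket_xp_bar_xm_pen:
  "1 \<le> a \<Longrightarrow> a \<le> b \<Longrightarrow> b < r \<Longrightarrow> 1 \<le> k \<Longrightarrow> k < r \<Longrightarrow>
   bracket r (xp_bar a b) (xm_pen r k) =
     (if k = a then msc (-1) (xp_bar b r) else if k = b then msc (-1) (xp_bar a r) else 0)"
  by (simp add: bracket_calc; auto simp: fun_eq_iff E_def msc_def)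

lemma bracket_xp_bar_xm_last:
  "1 \<le> a \<Longrightarrow> a \<le> b \<Longrightarrow> b < r \<Longrightarrow> 1 \<le> k \<Longrightarrow> k \<le> r \<Longrightarrow>
   bracket r (xp_bar a b) (xm_last r k) =
     (if k = a then xp_pen r b else if k = b then xp_pen r a else 0)"
  by (simp add: bracket_calc; auto simp: fun_eq_iff E_def msc_def)

lemma bracket_xp_bar_last_xm_pen:
  "1 \<le> c \<Longrightarrow> c < r \<Longrightarrow> 1 \<le> k \<Longrightarrow> k < r \<Longrightarrow>
   bracket r (xp_bar c r) (xm_pen r k) = (if k = c then msc (-2) (xp_bar r r) else 0)"
  by (simp add: bracket_calc; auto simp: fun_eq_iff E_def msc_def)

lemma bracket_xp_bar_last_xm_last:
  "1 \<le> c \<Longrightarrow> c < r \<Longrightarrow> 1 \<le> k \<Longrightarrow> k \<le> r \<Longrightarrow>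
   bracket r (xp_bar c r) (xm_last r k) =
     (if k = c then hdiag c + hdiag r else if k < c then xm_ij k (c - 1)
      else if k < r then xp_ij c (k - 1) else xp_pen r c)"
  by (simp add: bracket_calc; auto simp: fun_eq_iff E_def msc_def)

lemma bracket_xp_pen_xm_last:
  "1 \<le> c \<Longrightarrow> c < r \<Longrightarrow> 1 \<le> k \<Longrightarrow> k \<le> r \<Longrightarrow>
   bracket r (xp_pen r c) (xm_last r k) = (if k = c then msc (-2) (xm_last r r) else 0)"
  by (simp add: bracket_calc; auto simp: fun_eq_iff E_def msc_def)

lemma bracket_xm_ij_xm_pen:
  "1 \<le> a \<Longrightarrow> a \<le> b \<Longrightarrow> b + 1 < r \<Longrightarrow> 1 \<le> k \<Longrightarrow> k < r \<Longrightarrow>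
   bracket r (xm_ij a b) (xm_pen r k) = (if k = b + 1 then msc (-1) (xm_pen r a) else 0)"
  by (simp add: bracket_calc; auto simp: fun_eq_iff E_def msc_def)

lemma bracket_xm_last_xm_ij:
  "1 \<le> a \<Longrightarrow> a \<le> b \<Longrightarrow> b + 1 < r \<Longrightarrow> 1 \<le> k \<Longrightarrow> k \<le> r \<Longrightarrow>
   bracket r (xm_last r k) (xm_ij a b) = (if k = b + 1 then xm_last r a else 0)"
  by (simp add: bracket_calc; auto simp: fun_eq_iff E_def msc_def)

lemma bracket_xm_last_xm_pen:
  "1 \<le> k \<Longrightarrow> k < r \<Longrightarrow> 1 \<le> k' \<Longrightarrow> k' \<le> r \<Longrightarrow>
   bracket r (xm_last r k') (xm_pen r k) =
     (if k' = r then xm_last r k else if k' = k then msc 2 (xm_bar k k)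
      else xm_bar (min k k') (max k k'))"
  by (simp add: bracket_calc; auto simp: fun_eq_iff E_def msc_def)

lemma bracket_xm_pen_xp_bar_rr:
  "1 \<le> k \<Longrightarrow> k < r \<Longrightarrow> bracket r (xm_pen r k) (xp_bar r r) = 0"
  by (simp add: bracket_calc; auto simp: fun_eq_iff E_def msc_def)

lemma bracket_xp_bar_rr_xm_last:
  "1 \<le> k \<Longrightarrow> k \<le> r \<Longrightarrow>
   bracket r (xp_bar r r) (xm_last r k) = (if k = r then hdiag r else xm_pen r k)"
  by (simp add: bracket_calc; auto simp: fun_eq_iff E_def msc_def)

lemma bracket_xm_pen_xm_bar:
  "1 \<le> a \<Longrightarrow> a \<le> b \<Longrightarrow> b < r \<Longrightarrow> 1 \<le> k \<Longrightarrow> k < r \<Longrightarrow>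
   bracket r (xm_pen r k) (xm_bar a b) = 0"
  by (simp add: bracket_calc; auto simp: fun_eq_iff E_def msc_def)

lemma bracket_xm_last_xm_bar:
  "1 \<le> a \<Longrightarrow> a \<le> b \<Longrightarrow> b < r \<Longrightarrow> 1 \<le> k \<Longrightarrow> k \<le> r \<Longrightarrow>
   bracket r (xm_last r k) (xm_bar a b) = 0"
  by (simp add: bracket_calc; auto simp: fun_eq_iff E_def msc_def)

section \<open>The subalgebra g_{r-1} and its Borel part\<close>

lemma sp_add: "A \<in> sp r \<Longrightarrow> B \<in> sp r \<Longrightarrow> A + B \<in> sp r"
  and sp_msc: "A \<in> sp r \<Longrightarrow> msc c A \<in> sp r"
  and sp_zero: "0 \<in> sp r"
  by (auto simp: sp_def msc_def algebra_simps)

lemma sp_hdiag: "1 \<le> j \<Longrightarrow> j \<le> r \<Longrightarrow> hdiag j \<in> sp r"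
  and sp_xp_ij: "1 \<le> a \<Longrightarrow> a \<le> b \<Longrightarrow> b < r \<Longrightarrow> xp_ij a b \<in> sp r"
  and sp_xm_ij: "1 \<le> a \<Longrightarrow> a \<le> b \<Longrightarrow> b < r \<Longrightarrow> xm_ij a b \<in> sp r"
  and sp_xp_bar: "1 \<le> a \<Longrightarrow> a \<le> b \<Longrightarrow> b \<le> r \<Longrightarrow> xp_bar a b \<in> sp r"
  and sp_xm_bar: "1 \<le> a \<Longrightarrow> a \<le> b \<Longrightarrow> b \<le> r \<Longrightarrow> xm_bar a b \<in> sp r"
  by (auto simp: sp_def hdiag_def xp_ij_def xm_ij_def xp_bar_def xm_bar_def E_def Idx_iff)

lemma sp_xm_pen: "1 \<le> k \<Longrightarrow> k < r \<Longrightarrow> xm_pen r k \<in> sp r"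
  and sp_xm_last: "1 \<le> k \<Longrightarrow> k \<le> r \<Longrightarrow> xm_last r k \<in> sp r"
  and sp_xp_pen: "1 \<le> k \<Longrightarrow> k < r \<Longrightarrow> xp_pen r k \<in> sp r"
  by (auto simp: xm_pen_def xm_last_def xp_pen_def intro: sp_xm_ij sp_xm_bar sp_xp_ij)

lemma module_msc: "module msc"
  by unfold_locales (auto simp: msc_def fun_eq_iff algebra_simps)

lemma mspan_base: "x \<in> S \<Longrightarrow> x \<in> mspan S"
  unfolding mspan_def using module.span_base[OF module_msc] by blast

lemma xp_ij_nplus: "1 \<le> a \<Longrightarrow> a \<le> b \<Longrightarrow> b < r \<Longrightarrow> xp_ij a b \<in> nplus r"
  and xp_bar_nplus: "1 \<le> a \<Longrightarrow> a \<le> b \<Longrightarrow> b \<le> r \<Longrightarrow> xp_bar a b \<in> nplus r"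
  unfolding nplus_def by (rule mspan_base, blast)+

lemma xp_pen_nplus: "1 \<le> k \<Longrightarrow> k < r \<Longrightarrow> xp_pen r k \<in> nplus r"
  unfolding xp_pen_def by (rule xp_ij_nplus) auto

lemma xm_ij_nminus_red: "1 \<le> a \<Longrightarrow> a \<le> b \<Longrightarrow> b + 1 < r \<Longrightarrow> xm_ij a b \<in> nminus_red r"
  and xm_bar_nminus_red: "1 \<le> a \<Longrightarrow> a \<le> b \<Longrightarrow> b < r \<Longrightarrow> xm_bar a b \<in> nminus_red r"
  unfolding nminus_red_def by (rule mspan_base, force)+

lemma hdiag_cartan: "1 \<le> j \<Longrightarrow> j \<le> r \<Longrightarrow> hdiag j \<in> cartan r"
  unfolding cartan_def hdiag_def by (rule mspan_base) blast

lemma g_red_sp: "A \<in> g_red r \<Longrightarrow> A \<in> sp r"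
  by (simp add: g_red_def)

lemma g_red_add: "A \<in> g_red r \<Longrightarrow> B \<in> g_red r \<Longrightarrow> A + B \<in> g_red r"
  by (simp add: g_red_def sp_add)

lemma g_red_msc: "A \<in> g_red r \<Longrightarrow> msc c A \<in> g_red r"
  by (simp add: g_red_def sp_msc) (simp add: msc_def)

lemma g_red_zero: "0 \<in> g_red r"
  by (simp add: g_red_def sp_zero)

lemma subspace_g_red: "module.subspace msc (g_red r)"
  using g_red_add g_red_msc g_red_zero by (auto simp: module.subspace_def[OF module_msc])

lemma nminus_red_subset_g_red: "nminus_red r \<subseteq> g_red r"
  unfolding nminus_red_def mspan_def
proof (rule module.span_minimal[OF module_msc _ subspace_g_red])
  have "xm_ij i j \<in> g_red r" if "1 \<le> i" "i \<le> j" "j < r - 1" for i j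
    using that sp_xm_ij[of i j r] by (auto simp: g_red_def xm_ij_def E_def)
  moreover have "xm_bar i j \<in> g_red r" if "1 \<le> i" "i \<le> j" "j \<le> r - 1" for i j
    using that sp_xm_bar[of i j r] by (auto simp: g_red_def xm_bar_def E_def)
  ultimately show "{xm_ij i j |i j. 1 \<le> i \<and> i \<le> j \<and> j < r - 1} \<union>
      {xm_bar i j |i j. 1 \<le> i \<and> i \<le> j \<and> j \<le> r - 1} \<subseteq> g_red r"
    by blast
qed

definition borel_red :: "nat \<Rightarrow> mat set" where
  "borel_red r = {hdiag j | j. 1 \<le> j \<and> j < r} \<union> {xp_ij a b | a b. 1 \<le> a \<and> a \<le> b \<and> b + 1 < r}
     \<union> {xp_bar a b | a b. 1 \<le> a \<and> a \<le> b \<and> b < r}"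

lemma hdiag_borel_red: "1 \<le> j \<Longrightarrow> j < r \<Longrightarrow> hdiag j \<in> borel_red r"
  and xp_ij_borel_red: "1 \<le> a \<Longrightarrow> a \<le> b \<Longrightarrow> b + 1 < r \<Longrightarrow> xp_ij a b \<in> borel_red r"
  and xp_bar_borel_red: "1 \<le> a \<Longrightarrow> a \<le> b \<Longrightarrow> b < r \<Longrightarrow> xp_bar a b \<in> borel_red r"
  unfolding borel_red_def by blast+

lemma borel_red_cases:
  assumes "x \<in> borel_red r"
  obtains (hdiag) j where "x = hdiag j" "1 \<le> j" "j < r"
  | (xp_ij) a b where "x = xp_ij a b" "1 \<le> a" "a \<le> b" "b + 1 < r"
  | (xp_bar) a b where "x = xp_bar a b" "1 \<le> a" "a \<le> b" "b < r"
  using assms unfolding borel_red_def by blast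

lemma borel_red_g_red:
  assumes "x \<in> borel_red r"
  shows "x \<in> g_red r"
  using assms
proof (cases rule: borel_red_cases)
  case (hdiag j)
  then show ?thesis
    using sp_hdiag[of j r] by (auto simp: g_red_def hdiag_def E_def)
next
  case (xp_ij a b)
  then show ?thesis
    using sp_xp_ij[of a b r] by (auto simp: g_red_def xp_ij_def E_def)
next
  case (xp_bar a b)
  then show ?thesis
    using sp_xp_bar[of a b r] by (auto simp: g_red_def xp_bar_def E_def)
qed

definition E_sp :: "int \<Rightarrow> int \<Rightarrow> mat" where
  "E_sp i j = E i j - msc (of_int (sgn i * sgn j)) (E (- j) (- i))"

lemma sum_mat_apply: "(\<Sum>x\<in>S. f x :: mat) p q = (\<Sum>x\<in>S. f x p q)"
  by (induction S rule: infinite_finite_induct) auto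

lemma sum_msc_E_apply:
  assumes "finite S"
  shows "(\<Sum>x\<in>S. msc (c x) (E (fst x) (snd x))) p q = (if (p, q) \<in> S then c (p, q) else 0)"
proof -
  have "(\<Sum>x\<in>S. msc (c x) (E (fst x) (snd x))) p q = (\<Sum>x\<in>S. if x = (p, q) then c (p, q) else 0)"
    unfolding sum_mat_apply by (rule sum.cong) (auto simp: msc_def E_def)
  then show ?thesis
    using assms by simp
qed

lemma Idx_uminus [simp]: "- x \<in> Idx r \<longleftrightarrow> x \<in> Idx r"
  by (auto simp: Idx_iff)

lemma Idx_diff_one: "x \<in> Idx (r - 1) \<longleftrightarrow> x \<in> Idx r \<and> x \<noteq> int r \<and> x \<noteq> - int r"
  by (auto simp: Idx_iff)

lemma g_red_entry_zero: "A \<in> g_red r \<Longrightarrow> p \<notin> Idx (r - 1) \<or> q \<notin> Idx (r - 1) \<Longrightarrow> A p q = 0"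
  unfolding g_red_def sp_def Idx_diff_one by blast

lemma g_red_expand:
  assumes A: "A \<in> g_red r"
  defines "S \<equiv> Idx (r - 1) \<times> Idx (r - 1)"
  shows "A = msc (1/2) (\<Sum>x\<in>S. msc (A (fst x) (snd x)) (E_sp (fst x) (snd x)))"
proof -
  have fin: "finite S"
    by (simp add: S_def)
  define s :: "int \<Rightarrow> int \<Rightarrow> complex" where "s i j = of_int (sgn i * sgn j)" for i j
  let ?swap = "\<lambda>x :: int \<times> int. (- snd x, - fst x)"
  have swap_S: "?swap x \<in> S \<longleftrightarrow> x \<in> S" for x
    by (cases x) (auto simp: S_def)
  have "(\<Sum>x\<in>S. msc (A (fst x) (snd x) * s (fst x) (snd x)) (E (fst (?swap x)) (snd (?swap x)))) =
        (\<Sum>x\<in>S. msc (A (- snd x) (- fst x) * s (fst x) (snd x)) (E (fst x) (snd x)))"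
    by (rule sum.reindex_bij_witness[of _ ?swap ?swap]) (auto simp: swap_S s_def sgn_minus mult.commute)
  then have sum_eq: "(\<Sum>x\<in>S. msc (A (fst x) (snd x)) (E_sp (fst x) (snd x))) =
      (\<Sum>x\<in>S. msc (A (fst x) (snd x) - A (- snd x) (- fst x) * s (fst x) (snd x)) (E (fst x) (snd x)))"
    by (simp add: E_sp_def s_def msc_def sum_subtractf algebra_simps fun_eq_iff sum_mat_apply)
  show ?thesis
  proof (intro ext)
    fix p q
    have "A p q - A (- q) (- p) * s p q = 2 * A p q" if "(p, q) \<in> S"
    proof -
      have "p \<in> Idx r" "q \<in> Idx r"
        using that by (auto simp: S_def Idx_iff)
      then have "A p q = - s p q * A (- q) (- p)"
        using A unfolding g_red_def sp_def s_def by blast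
      then show ?thesis
        by (simp add: algebra_simps)
    qed
    moreover have "A p q = 0" if "(p, q) \<notin> S"
      using that g_red_entry_zero[OF A] unfolding S_def by auto
    ultimately show "A p q = msc (1/2) (\<Sum>x\<in>S. msc (A (fst x) (snd x)) (E_sp (fst x) (snd x))) p q"
      unfolding sum_eq msc_def[of "1/2"] sum_msc_E_apply[OF fin] by auto
  qed
qed

lemma mspan_msc: "x \<in> mspan S \<Longrightarrow> msc c x \<in> mspan S"
  unfolding mspan_def by (rule module.span_scale[OF module_msc])

lemma E_sp_pos_pos:
  assumes "1 \<le> a" "a < r" "1 \<le> b" "b < r"
  shows "E_sp (int a) (int b) \<in> mspan (borel_red r \<union> nminus_red r)"
proof -
  consider "a < b" | "a = b" | "b < a"
    by linarith
  then have "E_sp (int a) (int b) \<in> borel_red r \<union> nminus_red r"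
  proof cases
    case 1
    then have "E_sp (int a) (int b) = xp_ij a (b - 1)"
      using assms by (auto simp: E_sp_def xp_ij_def msc_def E_def fun_eq_iff)
    moreover have "xp_ij a (b - 1) \<in> borel_red r"
      using 1 assms by (intro xp_ij_borel_red) auto
    ultimately show ?thesis
      by simp
  next
    case 2
    then have "E_sp (int a) (int b) = hdiag a"
      using assms by (auto simp: E_sp_def hdiag_def msc_def E_def fun_eq_iff)
    moreover have "hdiag a \<in> borel_red r"
      using assms by (simp add: hdiag_borel_red)
    ultimately show ?thesis
      by simp
  next
    case 3
    then have "E_sp (int a) (int b) = xm_ij b (a - 1)"
      using assms by (auto simp: E_sp_def xm_ij_def msc_def E_def fun_eq_iff)
    moreover have "xm_ij b (a - 1) \<in> nminus_red r"
      using 3 assms by (intro xm_ij_nminus_red) auto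
    ultimately show ?thesis
      by simp
  qed
  then show ?thesis
    by (rule mspan_base)
qed

lemma E_sp_pos_neg:
  assumes "1 \<le> a" "a < r" "1 \<le> b" "b < r"
  shows "E_sp (int a) (- int b) \<in> mspan (borel_red r \<union> nminus_red r)"
proof -
  have "E_sp (int a) (- int b) = (if a = b then msc 2 (xp_bar a a) else xp_bar (min a b) (max a b))"
    using assms by (auto simp: E_sp_def xp_bar_def msc_def E_def fun_eq_iff min_def max_def)
  moreover have "1 \<le> min a b" "min a b \<le> max a b" "max a b < r"
    using assms by auto
  then have "xp_bar (min a b) (max a b) \<in> borel_red r"
    by (rule xp_bar_borel_red)
  ultimately show ?thesis
    by (cases "a = b") (simp_all add: mspan_base mspan_msc)
qed

lemma E_sp_neg_pos:
  assumes "1 \<le> a" "a < r" "1 \<le> b" "b < r"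
  shows "E_sp (- int a) (int b) \<in> mspan (borel_red r \<union> nminus_red r)"
proof -
  have "E_sp (- int a) (int b) = (if a = b then msc 2 (xm_bar a a) else xm_bar (min a b) (max a b))"
    using assms by (auto simp: E_sp_def xm_bar_def msc_def E_def fun_eq_iff min_def max_def)
  moreover have "xm_bar (min a b) (max a b) \<in> nminus_red r"
    using assms by (intro xm_bar_nminus_red) auto
  ultimately show ?thesis
    by (cases "a = b") (simp_all add: mspan_base mspan_msc)
qed

lemma E_sp_neg_neg:
  assumes "1 \<le> a" "a < r" "1 \<le> b" "b < r"
  shows "E_sp (- int a) (- int b) \<in> mspan (borel_red r \<union> nminus_red r)"
proof -
  have "E_sp (- int a) (- int b) = msc (-1) (E_sp (int b) (int a))"
    using assms by (auto simp: E_sp_def msc_def E_def fun_eq_iff)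
  then show ?thesis
    using E_sp_pos_pos[OF assms(3,4,1,2)] mspan_msc by metis
qed

lemma E_sp_in_mspan:
  assumes i: "i \<in> Idx (r - 1)" and j: "j \<in> Idx (r - 1)"
  shows "E_sp i j \<in> mspan (borel_red r \<union> nminus_red r)"
proof -
  have "\<exists>a. 1 \<le> a \<and> a < r \<and> (x = int a \<or> x = - int a)" if "x \<in> Idx (r - 1)" for x
    using that by (intro exI[of _ "nat \<bar>x\<bar>"]) (auto simp: Idx_iff)
  then obtain a b where ab: "1 \<le> a" "a < r" "1 \<le> b" "b < r"
    and "i = int a \<or> i = - int a" "j = int b \<or> j = - int b"
    using i j by meson
  then show ?thesis
    using E_sp_pos_pos[OF ab] E_sp_pos_neg[OF ab] E_sp_neg_pos[OF ab] E_sp_neg_neg[OF ab] by blast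
qed

lemma g_red_subset_mspan: "g_red r \<subseteq> mspan (borel_red r \<union> nminus_red r)"
proof
  fix A
  assume A: "A \<in> g_red r"
  let ?S = "Idx (r - 1) \<times> Idx (r - 1)"
  have "msc (A (fst x) (snd x)) (E_sp (fst x) (snd x)) \<in> mspan (borel_red r \<union> nminus_red r)"
    if "x \<in> ?S" for x
    using that E_sp_in_mspan[of "fst x" r "snd x"] mspan_msc by (simp add: mem_Times_iff)
  then have "(\<Sum>x\<in>?S. msc (A (fst x) (snd x)) (E_sp (fst x) (snd x))) \<in> mspan (borel_red r \<union> nminus_red r)"
    unfolding mspan_def by (rule module.span_sum[OF module_msc])
  then have "msc (1/2) (\<Sum>x\<in>?S. msc (A (fst x) (snd x)) (E_sp (fst x) (snd x)))
      \<in> mspan (borel_red r \<union> nminus_red r)"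
    by (rule mspan_msc)
  then show "A \<in> mspan (borel_red r \<union> nminus_red r)"
    using g_red_expand[OF A] by simp
qed

lemma sum_Idx_uminus: "(\<Sum>k\<in>Idx r. f (- k)) = (\<Sum>k\<in>Idx r. f k)"
  by (rule sum.reindex_bij_witness[of _ uminus uminus]) auto

lemma Idx_nonzero: "k \<in> Idx r \<Longrightarrow> k \<noteq> 0"
  by (auto simp: Idx_iff)

lemma mmul_sp_swap:
  assumes A: "A \<in> sp r" and B: "B \<in> sp r" and pq: "p \<in> Idx r" "q \<in> Idx r"
  shows "mmul r A B p q = of_int (sgn p * sgn q) * mmul r B A (- q) (- p)"
proof -
  have a: "A i j = - of_int (sgn i * sgn j) * A (- j) (- i)" if "i \<in> Idx r" "j \<in> Idx r" for i j
    using A that unfolding sp_def by blast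
  have b: "B i j = - of_int (sgn i * sgn j) * B (- j) (- i)" if "i \<in> Idx r" "j \<in> Idx r" for i j
    using B that unfolding sp_def by blast
  have sq: "of_int (sgn k) * of_int (sgn k) = (1::complex)" if "k \<in> Idx r" for k
    using Idx_nonzero[OF that] by (cases "k > 0") (auto simp: sgn_if)
  have "mmul r A B p q = (\<Sum>k\<in>Idx r. A p k * B k q)" by (simp add: mmul_def)
  also have "\<dots> = (\<Sum>k\<in>Idx r. of_int (sgn p * sgn q) * (B (- q) (- k) * A (- k) (- p)))"
  proof (rule sum.cong[OF refl])
    fix k assume k: "k \<in> Idx r"
    have "A p k * B k q = (of_int (sgn k) * of_int (sgn k)) * (of_int (sgn p * sgn q) * (B (- q) (- k) * A (- k) (- p)))"
      using a[OF pq(1) k] b[OF k pq(2)] by (simp add: algebra_simps)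
    then show "A p k * B k q = of_int (sgn p * sgn q) * (B (- q) (- k) * A (- k) (- p))"
      using sq[OF k] by simp
  qed
  also have "\<dots> = of_int (sgn p * sgn q) * (\<Sum>k\<in>Idx r. B (- q) (- k) * A (- k) (- p))"
    by (simp add: sum_distrib_left)
  also have "(\<Sum>k\<in>Idx r. B (- q) (- k) * A (- k) (- p)) = (\<Sum>k\<in>Idx r. B (- q) k * A k (- p))"
    by (rule sum_Idx_uminus[of "\<lambda>k. B (- q) k * A k (- p)" r])
  finally show ?thesis by (simp add: mmul_def)
qed

lemma sp_bracket:
  assumes A: "A \<in> sp r" and B: "B \<in> sp r"
  shows "bracket r A B \<in> sp r"
  unfolding sp_def
proof (intro CollectI conjI allI impI ballI)
  fix i j :: int assume "i \<notin> Idx r \<or> j \<notin> Idx r"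
  moreover have "A i k = 0" "B i k = 0" if "i \<notin> Idx r" for i k using A B that unfolding sp_def by blast+
  moreover have "A k j = 0" "B k j = 0" if "j \<notin> Idx r" for j k using A B that unfolding sp_def by blast+
  ultimately show "bracket r A B i j = 0" unfolding bracket_def mmul_def by auto
next
  fix i j assume ij: "i \<in> Idx r" "j \<in> Idx r"
  have m1: "mmul r A B i j = of_int (sgn i * sgn j) * mmul r B A (- j) (- i)" by (rule mmul_sp_swap[OF A B ij])
  have m2: "mmul r B A i j = of_int (sgn i * sgn j) * mmul r A B (- j) (- i)" by (rule mmul_sp_swap[OF B A ij])
  show "bracket r A B i j = - of_int (sgn i * sgn j) * bracket r A B (- j) (- i)"
    unfolding bracket_def using m1 m2 by (simp add: algebra_simps)
qed

lemma g_red_bracket: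
  assumes A: "A \<in> g_red r" and B: "B \<in> g_red r"
  shows "bracket r A B \<in> g_red r"
proof -
  have "bracket r A B \<in> sp r" using A B unfolding g_red_def by (auto intro: sp_bracket)
  moreover have "bracket r A B i j = 0" if "i \<in> {int r, - int r} \<or> j \<in> {int r, - int r}" for i j
  proof -
    have "A i k = 0 \<and> B i k = 0 \<or> A k j = 0 \<and> B k j = 0" for k
      using A B that unfolding g_red_def by blast
    then have "A i k * B k j = 0 \<and> B i k * A k j = 0" for k by auto
    then have "mmul r A B i j = 0" "mmul r B A i j = 0" unfolding mmul_def by (simp_all add: sum.neutral)
    then show ?thesis unfolding bracket_def by simp
  qed
  ultimately show ?thesis unfolding g_red_def by blast
qed

section \<open>The orders on I^n and I^{r-1} x I^r\<close>

lemma lgt_trans: "lgt n a b \<Longrightarrow> lgt n b c \<Longrightarrow> lgt n a c"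
proof -
  assume "lgt n a b" "lgt n b c"
  then obtain s1 s2 where 1: "s1 \<in> {1..n}" "\<forall>q\<in>{1..<s1}. a q = b q" "a s1 < b s1"
    and 2: "s2 \<in> {1..n}" "\<forall>q\<in>{1..<s2}. b q = c q" "b s2 < c s2"
    unfolding lgt_def by blast
  show ?thesis unfolding lgt_def
  proof (cases s1 s2 rule: linorder_cases)
    case less
    then show "\<exists>s\<in>{1..n}. (\<forall>q\<in>{1..<s}. a q = c q) \<and> a s < c s"
      using 1 2 by (intro bexI[of _ s1]) auto
  next
    case equal
    then show "\<exists>s\<in>{1..n}. (\<forall>q\<in>{1..<s}. a q = c q) \<and> a s < c s"
      using 1 2 by (intro bexI[of _ s1]) auto
  next
    case greater
    then show "\<exists>s\<in>{1..n}. (\<forall>q\<in>{1..<s}. a q = c q) \<and> a s < c s"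
      using 1 2 by (intro bexI[of _ s2]) auto
  qed
qed

lemma dgt_trans: "dgt n a b \<Longrightarrow> dgt n b c \<Longrightarrow> dgt n a c"
proof -
  assume "dgt n a b" "dgt n b c"
  then obtain s1 s2 where 1: "s1 \<in> {1..n}" "\<forall>q\<in>{s1<..n}. a q = b q" "b s1 < a s1"
    and 2: "s2 \<in> {1..n}" "\<forall>q\<in>{s2<..n}. b q = c q" "c s2 < b s2"
    unfolding dgt_def by blast
  show ?thesis unfolding dgt_def
  proof (cases s1 s2 rule: linorder_cases)
    case less
    then show "\<exists>s\<in>{1..n}. (\<forall>q\<in>{s<..n}. a q = c q) \<and> c s < a s"
      using 1 2 by (intro bexI[of _ s2]) auto
  next
    case equal
    then show "\<exists>s\<in>{1..n}. (\<forall>q\<in>{s<..n}. a q = c q) \<and> c s < a s"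
      using 1 2 by (intro bexI[of _ s1]) auto
  next
    case greater
    then show "\<exists>s\<in>{1..n}. (\<forall>q\<in>{s<..n}. a q = c q) \<and> c s < a s"
      using 1 2 by (intro bexI[of _ s1]) auto
  qed
qed

lemma lgt_eqon: "lgt n a b \<Longrightarrow> eqon n b c \<Longrightarrow> lgt n a c"
  and eqon_lgt: "eqon n a b \<Longrightarrow> lgt n b c \<Longrightarrow> lgt n a c"
  and dgt_eqon: "dgt n a b \<Longrightarrow> eqon n b c \<Longrightarrow> dgt n a c"
  and eqon_dgt: "eqon n a b \<Longrightarrow> dgt n b c \<Longrightarrow> dgt n a c"
  unfolding lgt_def dgt_def eqon_def by fastforce+

lemma eqon_refl: "eqon n a a"
  and eqon_trans: "eqon n a b \<Longrightarrow> eqon n b c \<Longrightarrow> eqon n a c"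
  by (auto simp: eqon_def)

lemma Ieq_refl: "Ieq n a a"
  by (simp add: Ieq_def eqon_refl)

lemma Igt_trans: "Igt n a b \<Longrightarrow> Igt n b c \<Longrightarrow> Igt n a c"
  and Igt_Ieq: "Igt n a b \<Longrightarrow> Ieq n b c \<Longrightarrow> Igt n a c"
  and Ieq_Igt: "Ieq n a b \<Longrightarrow> Igt n b c \<Longrightarrow> Igt n a c"
  and Ieq_trans: "Ieq n a b \<Longrightarrow> Ieq n b c \<Longrightarrow> Ieq n a c"
  unfolding Igt_def Ieq_def by (meson lgt_trans lgt_eqon eqon_lgt eqon_trans dgt_trans dgt_eqon eqon_dgt)+

lemma IIge_trans: "IIge r p q \<Longrightarrow> IIge r q u \<Longrightarrow> IIge r p u"
  and IIge_IIgt_trans: "IIge r p q \<Longrightarrow> IIgt r q u \<Longrightarrow> IIgt r p u"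
  unfolding IIge_def IIgt_def IIeq_def by (meson Igt_trans Igt_Ieq Ieq_Igt Ieq_trans)+

lemma IIge_lgtI: "lgt r (fst a) (fst b) \<Longrightarrow> IIge r (a', a) (b', b)"
  and IIge_sndI: "Igt r a b \<or> Ieq r a b \<Longrightarrow> IIge r (a', a) (a', b)"
  and IIge_fstI: "Igt (r - 1) a' b' \<or> Ieq (r - 1) a' b' \<Longrightarrow> IIge r (a', a) (b', a)"
  and IIge_eqI: "Ieq r a b \<Longrightarrow> Ieq (r - 1) a' b' \<Longrightarrow> IIge r (a', a) (b', b)"
  unfolding IIge_def IIgt_def IIeq_def Igt_def by (auto simp: Ieq_refl)

lemma dgt_or_eqon:
  assumes le: "\<And>q. d q \<le> d' q"
  shows "dgt n d' d \<or> eqon n d' d"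
proof (rule disjCI)
  assume "\<not> eqon n d' d"
  define S where "S = {q\<in>{1..n}. d' q \<noteq> d q}"
  have S: "finite S" "S \<noteq> {}"
    using \<open>\<not> eqon n d' d\<close> unfolding S_def eqon_def by auto
  have "d' q = d q" if "q \<in> {Max S<..n}" for q
  proof (rule ccontr)
    assume "d' q \<noteq> d q"
    then have "q \<in> S"
      using that Max_in[OF S] unfolding S_def by auto
    then show False
      using that S(1) by (meson Max_ge greaterThanAtMost_iff leD)
  qed
  moreover have "Max S \<in> {1..n}" "d (Max S) < d' (Max S)"
    using Max_in[OF S] le[of "Max S"] unfolding S_def by auto
  ultimately show "dgt n d' d"
    unfolding dgt_def by blast
qed

lemma Igt_or_Ieq_of_le:
  assumes "fst a = fst b" "\<And>q. snd b q \<le> snd a q"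
  shows "Igt n a b \<or> Ieq n a b"
  using dgt_or_eqon[of "snd b" "snd a" n] assms unfolding Igt_def Ieq_def by (auto simp: eqon_refl)

definition upward_closed :: "nat \<Rightarrow> (idx \<times> idx \<Rightarrow> bool) \<Rightarrow> bool" where
  "upward_closed r P \<longleftrightarrow> (\<forall>p q. IIge r p q \<longrightarrow> P q \<longrightarrow> P p)"

lemma upward_closedD: "upward_closed r P \<Longrightarrow> IIge r p q \<Longrightarrow> P q \<Longrightarrow> P p"
  unfolding upward_closed_def by blast

lemma upward_closed_IIge: "upward_closed r (\<lambda>p. IIge r p q)"
  and upward_closed_IIgt: "upward_closed r (\<lambda>p. IIgt r p q)"
  unfolding upward_closed_def using IIge_trans IIge_IIgt_trans by blast+

lemma lgt_multiset:
  assumes "M' + A = M + B" "A \<noteq> {#}" "set_mset A \<subseteq> {1..n}" "\<And>a b. a \<in># A \<Longrightarrow> b \<in># B \<Longrightarrow> a < b"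
  shows "lgt n (count M') (count M)"
proof -
  define s where "s = Min (set_mset A)"
  have sA: "s \<in># A" unfolding s_def using assms(2) by (simp add: Min_in)
  have smin: "a \<in># A \<Longrightarrow> s \<le> a" for a unfolding s_def by simp
  have eq: "count M' q + count A q = count M q + count B q" for q
    using arg_cong[OF assms(1), of "\<lambda>X. count X q"] by simp
  have B0: "count B q = 0" if "q \<le> s" for q
    using assms(4)[OF sA] that by (metis count_eq_zero_iff leD)
  have A0: "count A q = 0" if "q < s" for q
    using smin that by (metis count_eq_zero_iff leD)
  show ?thesis unfolding lgt_def
  proof (intro bexI[of _ s] conjI ballI)
    fix q assume "q \<in> {1..<s}"
    then show "count M' q = count M q" using eq[of q] A0[of q] B0[of q] by auto
  next
    have "count A s > 0" using sA by simp
    then show "count M' s < count M s" using eq[of s] B0[of s] by linarith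
  next
    show "s \<in> {1..n}" using sA assms(3) by auto
  qed
qed

lemma lgt_add_mset: "lgt n (count M') (count M) \<Longrightarrow> lgt n (count (add_mset k M')) (count (add_mset k M))"
  unfolding lgt_def by auto

lemma lgt_remove:
  assumes "M = M' + A" "A \<noteq> {#}" "set_mset A \<subseteq> {1..n}"
  shows "lgt n (count M') (count M)"
  using assms by (intro lgt_multiset[of _ A _ "{#}"]) auto

section \<open>Words\<close>

(* A word is a list of pairs (k, s) standing for x_k (x) t^s; wshape records for each letter k
   its multiplicity and its total degree, i.e. the pair (l, |s|) of the paper. *)

definition letters :: "(nat \<times> nat) list \<Rightarrow> nat multiset" where
  "letters L = mset (map fst L)"

definition degsum :: "(nat \<times> nat) list \<Rightarrow> nat \<Rightarrow> nat" where
  "degsum L k = sum_list (map snd (filter (\<lambda>p. fst p = k) L))"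

definition wshape :: "(nat \<times> nat) list \<Rightarrow> idx" where
  "wshape L = (count (letters L), degsum L)"

lemma letters_Nil [simp]: "letters [] = {#}"
  and letters_Cons [simp]: "letters ((k, a) # L) = add_mset k (letters L)"
  and letters_append [simp]: "letters (A @ B) = letters A + letters B"
  by (simp_all add: letters_def)

lemma degsum_Nil [simp]: "degsum [] q = 0"
  and degsum_Cons [simp]: "degsum ((k, a) # L) q = (if q = k then a else 0) + degsum L q"
  and degsum_append: "degsum (A @ B) q = degsum A q + degsum B q"
  by (simp_all add: degsum_def)

definition sorted_blocks :: "(nat \<times> nat) list \<Rightarrow> nat \<Rightarrow> nat list" where
  "sorted_blocks L k = sort (map snd (filter (\<lambda>p. fst p = k) L))"

definition concat_blocks :: "(nat \<Rightarrow> nat list) \<Rightarrow> nat list \<Rightarrow> (nat \<times> nat) list" where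
  "concat_blocks S ks = concat (map (\<lambda>k. map (Pair k) (S k)) ks)"

lemma shape_sorted_blocks: "shape (sorted_blocks L) = wshape L"
proof -
  have "length (filter (\<lambda>p. fst p = k) L) = count (letters L) k" for k
    by (induction L) (auto simp: letters_def)
  moreover have "sum_list (sort xs) = sum_list xs" for xs :: "nat list"
    by (metis mset_sort sum_mset_sum_list)
  ultimately show ?thesis
    unfolding shape_def wshape_def degsum_def sorted_blocks_def by (auto simp: fun_eq_iff)
qed

lemma mset_concat_sorted_blocks:
  assumes "\<And>p. p \<in> set L \<Longrightarrow> fst p \<in> set ks" "distinct ks"
  shows "mset (concat_blocks (sorted_blocks L) ks) = mset L"
proof -
  have block: "image_mset (Pair k) (mset (sorted_blocks L k)) = filter_mset (\<lambda>p. fst p = k) (mset L)" for k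
  proof -
    have "map (Pair k) (map snd (filter (\<lambda>p. fst p = k) L)) = filter (\<lambda>p. fst p = k) L"
      by (induction L) auto
    then show ?thesis
      unfolding sorted_blocks_def by (metis mset_filter mset_map mset_sort)
  qed
  have "mset (concat_blocks (sorted_blocks L) ks) = (\<Sum>k\<leftarrow>ks. filter_mset (\<lambda>p. fst p = k) (mset L))"
    by (simp add: concat_blocks_def mset_concat block comp_def)
  also have "\<dots> = (\<Sum>k\<in>set ks. filter_mset (\<lambda>p. fst p = k) (mset L))"
    using assms(2) by (simp add: sum_list_distinct_conv_sum_set)
  also have "\<dots> = mset L"
    using assms(1)
  proof (induction L)
    case (Cons p L)
    have "(\<Sum>k\<in>set ks. filter_mset (\<lambda>q. fst q = k) (mset (p # L))) =
        (\<Sum>k\<in>set ks. (if fst p = k then {#p#} else {#}) + filter_mset (\<lambda>q. fst q = k) (mset L))"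
      by (rule sum.cong) auto
    also have "\<dots> = (\<Sum>k\<in>set ks. (if fst p = k then {#p#} else {#})) +
        (\<Sum>k\<in>set ks. filter_mset (\<lambda>q. fst q = k) (mset L))"
      by (rule sum.distrib)
    also have "(\<Sum>k\<in>set ks. (if fst p = k then {#p#} else {#})) = {#p#}"
      using Cons.prems[of p] by (simp add: sum.delta)
    finally show ?case
      using Cons by simp
  qed simp
  finally show ?thesis .
qed

lemma count_letters_concat_blocks:
  "distinct ks \<Longrightarrow> count (letters (concat_blocks S ks)) k = (if k \<in> set ks then length (S k) else 0)"
proof (induction ks)
  case (Cons k' ks)
  have "count (letters (map (Pair k') xs)) k = (if k = k' then length xs else 0)" for xs
    by (induction xs) auto
  then show ?case
    using Cons by (auto simp: concat_blocks_def)
qed (simp add: concat_blocks_def)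

lemma degsum_concat_blocks:
  "distinct ks \<Longrightarrow> degsum (concat_blocks S ks) k = (if k \<in> set ks then sum_list (S k) else 0)"
proof (induction ks)
  case (Cons k' ks)
  have "degsum (map (Pair k') xs) k = (if k = k' then sum_list xs else 0)" for xs
    by (induction xs) auto
  then show ?case
    using Cons by (auto simp: concat_blocks_def degsum_append)
qed (simp add: concat_blocks_def)

lemma lgt_remove_letter:
  "letters L = add_mset k (letters L') \<Longrightarrow> 1 \<le> k \<Longrightarrow> k \<le> r \<Longrightarrow> lgt r (count (letters L')) (count (letters L))"
  by (rule lgt_remove[of _ _ "{#k#}"]) auto

lemma lgt_remove_letters:
  "letters L = add_mset k (add_mset k' (letters L')) \<Longrightarrow> 1 \<le> k \<Longrightarrow> k \<le> r \<Longrightarrow> 1 \<le> k' \<Longrightarrow> k' \<le> r \<Longrightarrow>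
   lgt r (count (letters L')) (count (letters L))"
  by (rule lgt_remove[of _ _ "{#k, k'#}"]) auto

lemma upward_closed_lgt:
  assumes "upward_closed r P" "P (q, wshape L)" "lgt r (count (letters L')) (count (letters L))"
  shows "P (q', wshape L')"
  using upward_closedD[OF assms(1) IIge_lgtI assms(2)] assms(3) by (simp add: wshape_def)

locale weyl_vector =
  fixes r :: nat and m :: "nat \<Rightarrow> nat" and smult :: "complex \<Rightarrow> 'v::ab_group_add \<Rightarrow> 'v"
    and act :: "mat \<Rightarrow> nat \<Rightarrow> 'v \<Rightarrow> 'v" and w :: 'v
  assumes r_pos: "1 \<le> r"
    and rep: "is_rep r smult act"
    and weyl: "weyl_vec r m smult act w"
begin

sublocale V: vector_space smult
  using rep by (simp add: is_rep_def)

sublocale VV: vector_space_pair smult smult ..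

lemma act_linear: "x \<in> sp r \<Longrightarrow> Vector_Spaces.linear smult smult (act x s)"
  using rep by (simp add: is_rep_def)

lemma act_add_mat: "x \<in> sp r \<Longrightarrow> y \<in> sp r \<Longrightarrow> act (x + y) s v = act x s v + act y s v"
  and act_msc: "x \<in> sp r \<Longrightarrow> act (msc c x) s v = smult c (act x s v)"
  using rep by (simp_all add: is_rep_def)

lemma act_zero_mat [simp]: "act 0 s v = 0"
proof -
  have "msc 0 (0 :: mat) = 0"
    by (simp add: msc_def fun_eq_iff)
  then have "act 0 s v = act (msc 0 0) s v"
    by simp
  also have "\<dots> = 0"
    by (simp add: act_msc sp_zero)
  finally show ?thesis .
qed

lemma act_commutator:
  "x \<in> sp r \<Longrightarrow> y \<in> sp r \<Longrightarrow> act x a (act y b v) = act y b (act x a v) + act (bracket r x y) (a + b) v"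
proof -
  assume "x \<in> sp r" "y \<in> sp r"
  then have "act x a (act y b v) - act y b (act x a v) = act (bracket r x y) (a + b) v"
    using rep unfolding is_rep_def by blast
  then show ?thesis
    by (simp add: algebra_simps)
qed

lemma act_commute:
  "x \<in> sp r \<Longrightarrow> y \<in> sp r \<Longrightarrow> bracket r x y = 0 \<Longrightarrow> act x a (act y b v) = act y b (act x a v)"
  using act_commutator[of x y a b v] by simp

lemma nplus_kills_w: "x \<in> nplus r \<Longrightarrow> act x s w = 0"
  using weyl unfolding weyl_vec_def by blast

lemma linear_into_subspace:
  assumes "Vector_Spaces.linear smult smult f" "V.subspace T" "\<And>x. x \<in> S \<Longrightarrow> f x \<in> T" "v \<in> V.span S"
  shows "f v \<in> T"
proof -
  have "V.span S \<subseteq> {v. f v \<in> T}"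
    using assms(1-3) VV.linear_subspace_linear_preimage by (intro V.span_minimal) auto
  then show ?thesis
    using assms(4) by blast
qed

lemma gen_sub_base: "X \<subseteq> gen_sub smult act A X"
  and gen_sub_closed: "x \<in> A \<Longrightarrow> u \<in> gen_sub smult act A X \<Longrightarrow> act x s u \<in> gen_sub smult act A X"
  and subspace_gen_sub: "V.subspace (gen_sub smult act A X)"
  unfolding gen_sub_def V.subspace_def by auto

lemma gen_sub_minimal:
  "X \<subseteq> M \<Longrightarrow> V.subspace M \<Longrightarrow> (\<And>x s u. x \<in> A \<Longrightarrow> u \<in> M \<Longrightarrow> act x s u \<in> M) \<Longrightarrow>
   gen_sub smult act A X \<subseteq> M"
  unfolding gen_sub_def by auto

definition act_word :: "(nat \<Rightarrow> mat) \<Rightarrow> (nat \<times> nat) list \<Rightarrow> 'v \<Rightarrow> 'v" where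
  "act_word X L v = foldr (\<lambda>(k, a) u. act (X k) a u) L v"

lemma act_word_Nil [simp]: "act_word X [] v = v"
  and act_word_Cons [simp]: "act_word X ((k, a) # L) v = act (X k) a (act_word X L v)"
  and act_word_append: "act_word X (A @ B) v = act_word X A (act_word X B v)"
  by (simp_all add: act_word_def)

lemma linear_act_word: "(\<And>p. p \<in> set L \<Longrightarrow> X (fst p) \<in> sp r) \<Longrightarrow> Vector_Spaces.linear smult smult (act_word X L)"
proof (induction L)
  case Nil
  then show ?case
    by (simp add: act_word_def V.linear_id[unfolded id_def])
next
  case (Cons p L)
  obtain k a where p: "p = (k, a)"
    by force
  have "act_word X (p # L) = act (X k) a \<circ> act_word X L"
    using p by (auto simp: fun_eq_iff)
  then show ?case
    using Cons p act_linear[of "X k" a] Vector_Spaces.linear_compose by (metis list.set_intros fst_conv)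
qed

lemma act_word_commute_letter:
  assumes "\<And>p v. p \<in> set A \<Longrightarrow> act (X (fst p)) (snd p) (act Y b v) = act Y b (act (X (fst p)) (snd p) v)"
  shows "act_word X A (act Y b v) = act Y b (act_word X A v)"
  using assms by (induction A) auto

lemma act_word_perm:
  assumes "mset L = mset L'"
    and "\<And>p q v. p \<in> set L \<Longrightarrow> q \<in> set L \<Longrightarrow>
      act (X (fst p)) (snd p) (act (X (fst q)) (snd q) v) = act (X (fst q)) (snd q) (act (X (fst p)) (snd p) v)"
  shows "act_word X L v = act_word X L' v"
  using assms
proof (induction L arbitrary: L')
  case (Cons p L)
  obtain A B where L': "L' = A @ p # B"
    using Cons.prems(1) by (metis list.set_intros(1) set_mset_mset split_list)
  obtain k a where p: "p = (k, a)"
    by force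
  have "set A \<subseteq> set (p # L)"
    using Cons.prems(1) L' by (metis mset_eq_setD set_append sup.cobounded1)
  then have "act_word X L' v = act (X k) a (act_word X (A @ B) v)"
    using L' p Cons.prems(2) by (simp add: act_word_append) (intro act_word_commute_letter, fastforce)
  also have "act_word X (A @ B) v = act_word X L v"
    using Cons.IH[of "A @ B"] Cons.prems L' by (simp add: subset_code(1))
  finally show ?case
    using p by simp
qed simp

definition pen_letters :: "(nat \<times> nat) list \<Rightarrow> bool" where
  "pen_letters A \<longleftrightarrow> (\<forall>p\<in>set A. 1 \<le> fst p \<and> fst p < r)"

definition last_letters :: "(nat \<times> nat) list \<Rightarrow> bool" where
  "last_letters L \<longleftrightarrow> (\<forall>p\<in>set L. 1 \<le> fst p \<and> fst p \<le> r)"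

lemma pen_letters_simps [simp]:
  "pen_letters []"
  "pen_letters ((k, a) # A) \<longleftrightarrow> 1 \<le> k \<and> k < r \<and> pen_letters A"
  "pen_letters (A @ B) \<longleftrightarrow> pen_letters A \<and> pen_letters B"
  by (auto simp: pen_letters_def)

lemma last_letters_simps [simp]:
  "last_letters []"
  "last_letters ((k, a) # L) \<longleftrightarrow> 1 \<le> k \<and> k \<le> r \<and> last_letters L"
  "last_letters (A @ B) \<longleftrightarrow> last_letters A \<and> last_letters B"
  by (auto simp: last_letters_def)

abbreviation pen_word :: "(nat \<times> nat) list \<Rightarrow> 'v \<Rightarrow> 'v" where
  "pen_word A u \<equiv> act_word (xm_pen r) A u"

abbreviation last_vec :: "(nat \<times> nat) list \<Rightarrow> 'v" where
  "last_vec L \<equiv> act_word (xm_last r) L w"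

lemma linear_pen_word: "pen_letters A \<Longrightarrow> Vector_Spaces.linear smult smult (pen_word A)"
  by (rule linear_act_word) (auto simp: pen_letters_def intro!: sp_xm_pen)

lemma xm_pen_commute: "1 \<le> k \<Longrightarrow> k < r \<Longrightarrow> 1 \<le> k' \<Longrightarrow> k' < r \<Longrightarrow>
  act (xm_pen r k) a (act (xm_pen r k') b v) = act (xm_pen r k') b (act (xm_pen r k) a v)"
  by (intro act_commute sp_xm_pen bracket_xm_pen_xm_pen)

lemma xm_last_commute: "1 \<le> k \<Longrightarrow> k \<le> r \<Longrightarrow> 1 \<le> k' \<Longrightarrow> k' \<le> r \<Longrightarrow>
  act (xm_last r k) a (act (xm_last r k') b v) = act (xm_last r k') b (act (xm_last r k) a v)"
  by (intro act_commute sp_xm_last bracket_xm_last_xm_last)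

lemma foldr_xpow_act_word:
  "foldr (\<lambda>k u. xpow act (X k) (S k) u) ks v = act_word X (concat_blocks S ks) v"
proof -
  have "xpow act (X k) ss v = act_word X (map (Pair k) ss) v" for k ss v
    by (induction ss) (auto simp: xpow_def)
  then show ?thesis
    by (induction ks) (auto simp: concat_blocks_def act_word_append)
qed

lemma xmono_act_word: "xmono r act j S v = act_word (\<lambda>k. xminus r k j) (concat_blocks S [1..<j+1]) v"
  unfolding xmono_def by (rule foldr_xpow_act_word)

lemma xminus_pen_eq: "(\<lambda>k. xminus r k (r - 1)) = xm_pen r"
  and xminus_last_eq: "(\<lambda>k. xminus r k r) = xm_last r"
  using r_pos by (auto simp: xminus_def xm_pen_def xm_last_def fun_eq_iff)

lemma pred_r_Suc: "r - 1 + 1 = r"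
  using r_pos by simp

lemma xmono_last_sorted_blocks:
  assumes "last_letters L"
  shows "xmono r act r (sorted_blocks L) v = act_word (xm_last r) L v"
  unfolding xmono_act_word xminus_last_eq
proof (rule act_word_perm)
  show "mset (concat_blocks (sorted_blocks L) [1..<r + 1]) = mset L"
    using assms by (intro mset_concat_sorted_blocks) (auto simp: last_letters_def)
qed (auto simp: concat_blocks_def sorted_blocks_def intro!: xm_last_commute)

lemma xmono_pen_sorted_blocks:
  assumes "pen_letters A"
  shows "xmono r act (r - 1) (sorted_blocks A) v = pen_word A v"
  unfolding xmono_act_word xminus_pen_eq pred_r_Suc
proof (rule act_word_perm)
  show "mset (concat_blocks (sorted_blocks A) [1..<r]) = mset A"
    using assms by (intro mset_concat_sorted_blocks) (auto simp: pen_letters_def)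
qed (auto simp: concat_blocks_def sorted_blocks_def intro!: xm_pen_commute)

lemma words_in_gens:
  assumes "pen_letters A" "last_letters L" "P (wshape A, wshape L)"
  shows "pen_word A (last_vec L) \<in> gens r act w P"
proof -
  have "pen_word A (last_vec L) = xmono r act (r - 1) (sorted_blocks A) (xmono r act r (sorted_blocks L) w)"
    by (simp only: xmono_last_sorted_blocks[OF assms(2)] xmono_pen_sorted_blocks[OF assms(1)])
  moreover have "P (shape (sorted_blocks A), shape (sorted_blocks L))"
    using assms by (simp add: shape_sorted_blocks)
  ultimately show ?thesis
    unfolding gens_def
    by (intro CollectI exI[of _ "sorted_blocks A"] exI[of _ "sorted_blocks L"]) (simp add: sorted_blocks_def)
qed

lemma gens_cases:
  assumes "g \<in> gens r act w P" "upward_closed r P"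
  obtains A L where "pen_letters A" "last_letters L" "P (wshape A, wshape L)" "g = pen_word A (last_vec L)"
proof -
  obtain S' S where g: "g = xmono r act (r - 1) S' (xmono r act r S w)" and PS: "P (shape S', shape S)"
    using assms(1) unfolding gens_def by blast
  define A where "A = concat_blocks S' [1..<r]"
  define L where "L = concat_blocks S [1..<r + 1]"
  have "g = pen_word A (last_vec L)"
    unfolding g xmono_act_word xminus_pen_eq xminus_last_eq pred_r_Suc A_def L_def ..
  moreover have "pen_letters A" "last_letters L"
    unfolding A_def L_def concat_blocks_def pen_letters_def last_letters_def by auto
  moreover have "IIge r (wshape A, wshape L) (shape S', shape S)"
    by (intro IIge_eqI)
      (auto simp: Ieq_def eqon_def wshape_def shape_def A_def L_def count_letters_concat_blocks
        degsum_concat_blocks)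
  then have "P (wshape A, wshape L)"
    using upward_closedD[OF assms(2)] PS by blast
  ultimately show thesis
    using that by blast
qed

section \<open>Positive elements moved through x^-_r-words\<close>

lemma act_commutator_in_subspace:
  assumes "x \<in> sp r" "y \<in> sp r" "V.subspace T"
    and "act y a (act x s v) \<in> T" "act (bracket r x y) (s + a) v \<in> T"
  shows "act x s (act y a v) \<in> T"
  using act_commutator[OF assms(1,2)] V.subspace_add[OF assms(3-5)] by simp

lemma act_last_vec_induct:
  assumes x: "x \<in> sp r" and sub: "\<And>L. V.subspace (T L)"
    and base: "\<And>s. act x s w \<in> T []"
    and prefix: "\<And>L k a v. 1 \<le> k \<Longrightarrow> k \<le> r \<Longrightarrow> last_letters L \<Longrightarrow> v \<in> T L \<Longrightarrow>
      act (xm_last r k) a v \<in> T ((k, a) # L)"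
    and bracket: "\<And>L k a s. 1 \<le> k \<Longrightarrow> k \<le> r \<Longrightarrow> last_letters L \<Longrightarrow>
      act (bracket r x (xm_last r k)) (s + a) (last_vec L) \<in> T ((k, a) # L)"
    and "last_letters L"
  shows "act x s (last_vec L) \<in> T L"
  using \<open>last_letters L\<close>
proof (induction L arbitrary: s)
  case (Cons p L)
  obtain k a where p: "p = (k, a)"
    by force
  have k: "1 \<le> k" "k \<le> r" and L: "last_letters L"
    using Cons.prems p by auto
  show ?case
    unfolding p act_word_Cons
    by (rule act_commutator_in_subspace[OF x sp_xm_last[OF k] sub prefix[OF k L Cons.IH[OF L]] bracket[OF k L]])
qed (simp add: base)

definition last_span :: "((nat \<times> nat) list \<Rightarrow> (nat \<times> nat) list \<Rightarrow> bool) \<Rightarrow> (nat \<times> nat) list \<Rightarrow> 'v set" where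
  "last_span R L = V.span {last_vec L' | L'. last_letters L' \<and> R L L'}"

lemma subspace_last_span: "V.subspace (last_span R L)"
  by (simp add: last_span_def)

lemma zero_in_last_span: "0 \<in> last_span R L"
  by (simp add: last_span_def V.span_zero)

lemma last_vec_in_last_span: "last_letters L' \<Longrightarrow> R L L' \<Longrightarrow> last_vec L' \<in> last_span R L"
  and smult_last_vec_in_last_span: "last_letters L' \<Longrightarrow> R L L' \<Longrightarrow> smult c (last_vec L') \<in> last_span R L"
  unfolding last_span_def by (blast intro: V.span_base V.span_scale)+

lemma last_span_into:
  assumes "v \<in> last_span R L" "Vector_Spaces.linear smult smult f" "V.subspace T"
    and "\<And>L'. last_letters L' \<Longrightarrow> R L L' \<Longrightarrow> f (last_vec L') \<in> T"
  shows "f v \<in> T"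
  using assms(1) unfolding last_span_def
  by (rule linear_into_subspace[OF assms(2,3), rotated]) (use assms(4) in blast)

lemma last_span_subset:
  assumes "v \<in> last_span R L" "V.subspace T" "\<And>L'. last_letters L' \<Longrightarrow> R L L' \<Longrightarrow> last_vec L' \<in> T"
  shows "v \<in> T"
  using last_span_into[OF assms(1) V.linear_id assms(2)] assms(3) by simp

lemma act_last_vec_last_span:
  assumes x: "x \<in> sp r"
    and R_Cons: "\<And>L L' k a. R L L' \<Longrightarrow> R ((k, a) # L) ((k, a) # L')"
    and base: "\<And>s. act x s w \<in> last_span R []"
    and bracket: "\<And>L k a s. 1 \<le> k \<Longrightarrow> k \<le> r \<Longrightarrow> last_letters L \<Longrightarrow>
      act (bracket r x (xm_last r k)) (s + a) (last_vec L) \<in> last_span R ((k, a) # L)"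
    and "last_letters L"
  shows "act x s (last_vec L) \<in> last_span R L"
proof (rule act_last_vec_induct[OF x subspace_last_span base _ bracket \<open>last_letters L\<close>])
  fix L k a v
  assume k: "1 \<le> k" "k \<le> r" and v: "v \<in> last_span R L"
  show "act (xm_last r k) a v \<in> last_span R ((k, a) # L)"
  proof (rule last_span_into[OF v act_linear[OF sp_xm_last[OF k]] subspace_last_span])
    fix L'
    assume "last_letters L'" "R L L'"
    then show "act (xm_last r k) a (last_vec L') \<in> last_span R ((k, a) # L)"
      using last_vec_in_last_span[of "(k, a) # L'" R "(k, a) # L"] k R_Cons by simp
  qed
qed

lemma act_xp_pen_last_vec:
  assumes c: "1 \<le> c" "c < r" and L: "last_letters L"
  shows "act (xp_pen r c) s (last_vec L)
    \<in> last_span (\<lambda>L L'. add_mset c (letters L') = add_mset r (letters L)) L"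
proof (rule act_last_vec_last_span[OF sp_xp_pen[OF c] _ _ _ L])
  fix s
  show "act (xp_pen r c) s w \<in> last_span (\<lambda>L L'. add_mset c (letters L') = add_mset r (letters L)) []"
    using nplus_kills_w[OF xp_pen_nplus[OF c]] by (simp add: zero_in_last_span)
next
  fix L k a s
  assume k: "1 \<le> k" "k \<le> r" and L: "last_letters L"
  show "act (bracket r (xp_pen r c) (xm_last r k)) (s + a) (last_vec L)
    \<in> last_span (\<lambda>L L'. add_mset c (letters L') = add_mset r (letters L)) ((k, a) # L)"
  proof (cases "k = c")
    case True
    then have "act (bracket r (xp_pen r c) (xm_last r k)) (s + a) (last_vec L) =
        smult (-2) (last_vec ((r, s + a) # L))"
      using c k r_pos by (simp add: bracket_xp_pen_xm_last act_msc sp_xm_last)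
    then show ?thesis
      unfolding True using L r_pos by (simp only:) (rule smult_last_vec_in_last_span, auto)
  qed (use c k in \<open>simp add: bracket_xp_pen_xm_last zero_in_last_span\<close>)
qed (simp add: add_mset_commute)

lemma act_hdiag_last_vec:
  assumes j: "1 \<le> j" "j \<le> r" and L: "last_letters L"
  shows "act (hdiag j) s (last_vec L)
    \<in> last_span (\<lambda>L L'. letters L' = letters L \<and> (\<forall>q. degsum L q \<le> degsum L' q)) L"
proof (rule act_last_vec_last_span[OF sp_hdiag[OF j] _ _ _ L])
  fix s
  have "act (hdiag j) s w = (if s = 0 then smult (wt r m (hdiag j)) w else 0)"
    using weyl hdiag_cartan[OF j] unfolding weyl_vec_def by blast
  then show "act (hdiag j) s w
    \<in> last_span (\<lambda>L L'. letters L' = letters L \<and> (\<forall>q. degsum L q \<le> degsum L' q)) []"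
    using smult_last_vec_in_last_span[of "[]"] by (simp add: zero_in_last_span)
next
  fix L k a s
  assume k: "1 \<le> k" "k \<le> r" and L: "last_letters L"
  obtain c where "bracket r (hdiag j) (xm_last r k) = msc c (xm_last r k)"
    using bracket_hdiag_xm_last[OF j k] by blast
  then have "act (bracket r (hdiag j) (xm_last r k)) (s + a) (last_vec L) = smult c (last_vec ((k, s + a) # L))"
    by (simp add: act_msc sp_xm_last[OF k])
  then show "act (bracket r (hdiag j) (xm_last r k)) (s + a) (last_vec L)
    \<in> last_span (\<lambda>L L'. letters L' = letters L \<and> (\<forall>q. degsum L q \<le> degsum L' q)) ((k, a) # L)"
    using k L by (simp only:) (rule smult_last_vec_in_last_span, auto)
qed auto

lemma act_xp_ij_last_vec:
  assumes ab: "1 \<le> a" "a \<le> b" "b + 1 < r" and L: "last_letters L"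
  shows "act (xp_ij a b) s (last_vec L)
    \<in> last_span (\<lambda>L L'. add_mset a (letters L') = add_mset (b + 1) (letters L)) L"
proof (rule act_last_vec_last_span[OF sp_xp_ij _ _ _ L])
  fix s
  show "act (xp_ij a b) s w \<in> last_span (\<lambda>L L'. add_mset a (letters L') = add_mset (b + 1) (letters L)) []"
    using nplus_kills_w xp_ij_nplus[of a b r] ab by (simp add: zero_in_last_span)
next
  fix L k a' s
  assume k: "1 \<le> k" "k \<le> r" and L: "last_letters L"
  show "act (bracket r (xp_ij a b) (xm_last r k)) (s + a') (last_vec L)
    \<in> last_span (\<lambda>L L'. add_mset a (letters L') = add_mset (b + 1) (letters L)) ((k, a') # L)"
  proof (cases "k = a")
    case True
    then have "act (bracket r (xp_ij a b) (xm_last r k)) (s + a') (last_vec L) =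
        smult (-1) (last_vec ((b + 1, s + a') # L))"
      using ab k by (simp add: bracket_xp_ij_xm_last act_msc sp_xm_last)
    then show ?thesis
      unfolding True using ab L by (simp only:) (rule smult_last_vec_in_last_span, auto simp: add_mset_commute)
  qed (use ab k in \<open>simp add: bracket_xp_ij_xm_last zero_in_last_span\<close>)
qed (use ab in \<open>auto simp: add_mset_commute\<close>)

lemma act_xp_bar_last_vec:
  assumes ab: "1 \<le> a" "a \<le> b" "b < r" and L: "last_letters L"
  shows "act (xp_bar a b) s (last_vec L)
    \<in> last_span (\<lambda>L L'. lgt r (count (letters L')) (count (letters L))) L"
proof (rule act_last_vec_last_span[OF sp_xp_bar _ _ _ L])
  fix s
  show "act (xp_bar a b) s w \<in> last_span (\<lambda>L L'. lgt r (count (letters L')) (count (letters L))) []"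
    using nplus_kills_w xp_bar_nplus[of a b r] ab by (simp add: zero_in_last_span)
next
  fix L k a' s
  assume k: "1 \<le> k" "k \<le> r" and L: "last_letters L"
  let ?T = "last_span (\<lambda>L L'. lgt r (count (letters L')) (count (letters L))) ((k, a') # L)"
  have xp_pen_case: "act (xp_pen r c) (s + a') (last_vec L) \<in> ?T" if c: "1 \<le> c" "c < r" "{#c, k#} = {#a, b#}" for c
  proof (rule last_span_subset[OF act_xp_pen_last_vec[OF c(1,2) L] subspace_last_span])
    fix L'
    assume L': "last_letters L'" "add_mset c (letters L') = add_mset r (letters L)"
    have "letters L' + {#a, b#} = letters ((k, a') # L) + {#r#}"
      using L'(2) c(3) by (metis add_mset_add_single letters_Cons add_mset_commute union_mset_add_mset_right)
    then have "lgt r (count (letters L')) (count (letters ((k, a') # L)))"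
      using ab by (intro lgt_multiset[of _ "{#a, b#}" _ "{#r#}"]) auto
    then show "last_vec L' \<in> ?T"
      using L' by (simp add: last_vec_in_last_span)
  qed
  consider "k = a" | "k \<noteq> a" "k = b" | "k \<noteq> a" "k \<noteq> b"
    by blast
  then show "act (bracket r (xp_bar a b) (xm_last r k)) (s + a') (last_vec L) \<in> ?T"
  proof cases
    case 1
    then show ?thesis
      using bracket_xp_bar_xm_last[OF ab k] xp_pen_case[of b] ab by (simp add: add_mset_commute)
  next
    case 2
    then show ?thesis
      using bracket_xp_bar_xm_last[OF ab k] xp_pen_case[of a] ab by simp
  next
    case 3
    then show ?thesis
      using bracket_xp_bar_xm_last[OF ab k] by (simp add: zero_in_last_span)
  qed
qed (use ab in \<open>auto simp: lgt_add_mset\<close>)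

(* The terms produced when x^+_{c,bar r} or x^+_{r,bar r} is moved through last_vec L: words
   of strictly smaller letter count, possibly hit by some x^-_{a,bar b} of n^-_{r-1}, and words
   with one letter x^-_{k,r} removed and x^-_{k,r-1} or some x^-_{k,j} of n^-_{r-1} put in front. *)

definition lower_terms :: "(nat \<times> nat) list \<Rightarrow> 'v set" where
  "lower_terms L =
     {last_vec L' | L'. last_letters L' \<and> lgt r (count (letters L')) (count (letters L))}
   \<union> {act (xm_bar a b) e (last_vec L') | a b e L'.
        1 \<le> a \<and> a \<le> b \<and> b < r \<and> last_letters L' \<and> lgt r (count (letters L')) (count (letters L))}
   \<union> {act (xm_pen r k) e (last_vec L') | k e L'.
        1 \<le> k \<and> k < r \<and> last_letters L' \<and> letters L = add_mset k (letters L')}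
   \<union> {act (xm_ij k j) e (last_vec L') | k j e L'.
        1 \<le> k \<and> k \<le> j \<and> j + 1 < r \<and> last_letters L' \<and> letters L = add_mset k (letters L')}"

lemma last_vec_lower_terms:
  "last_letters L' \<Longrightarrow> lgt r (count (letters L')) (count (letters L)) \<Longrightarrow>
   last_vec L' \<in> V.span (lower_terms L)"
  and xm_bar_lower_terms:
  "1 \<le> a \<Longrightarrow> a \<le> b \<Longrightarrow> b < r \<Longrightarrow> last_letters L' \<Longrightarrow> lgt r (count (letters L')) (count (letters L)) \<Longrightarrow>
   act (xm_bar a b) e (last_vec L') \<in> V.span (lower_terms L)"
  and xm_pen_lower_terms:
  "1 \<le> k \<Longrightarrow> k < r \<Longrightarrow> last_letters L' \<Longrightarrow> letters L = add_mset k (letters L') \<Longrightarrow>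
   act (xm_pen r k) e (last_vec L') \<in> V.span (lower_terms L)"
  and xm_ij_lower_terms:
  "1 \<le> k \<Longrightarrow> k \<le> j \<Longrightarrow> j + 1 < r \<Longrightarrow> last_letters L' \<Longrightarrow> letters L = add_mset k (letters L') \<Longrightarrow>
   act (xm_ij k j) e (last_vec L') \<in> V.span (lower_terms L)"
  unfolding lower_terms_def by (rule V.span_base, blast)+

lemma lower_terms_cases:
  assumes "x \<in> lower_terms L"
  obtains (last_vec) L' where "x = last_vec L'" "last_letters L'" "lgt r (count (letters L')) (count (letters L))"
  | (xm_bar) a b e L' where "x = act (xm_bar a b) e (last_vec L')" "1 \<le> a" "a \<le> b" "b < r"
      "last_letters L'" "lgt r (count (letters L')) (count (letters L))"
  | (xm_pen) k e L' where "x = act (xm_pen r k) e (last_vec L')" "1 \<le> k" "k < r"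
      "last_letters L'" "letters L = add_mset k (letters L')"
  | (xm_ij) k j e L' where "x = act (xm_ij k j) e (last_vec L')" "1 \<le> k" "k \<le> j" "j + 1 < r"
      "last_letters L'" "letters L = add_mset k (letters L')"
  using assms unfolding lower_terms_def by blast

lemma act_xm_last_xm_pen_lower_terms:
  assumes k: "1 \<le> k" "k \<le> r" and k': "1 \<le> k'" "k' < r"
    and L': "last_letters L'" "letters L = add_mset k' (letters L')"
  shows "act (xm_last r k) a (act (xm_pen r k') e (last_vec L')) \<in> V.span (lower_terms ((k, a) # L))"
proof -
  have "act (xm_pen r k') e (last_vec ((k, a) # L')) \<in> V.span (lower_terms ((k, a) # L))"
    using k k' L' by (intro xm_pen_lower_terms) (auto simp: add_mset_commute)
  moreover have "act (bracket r (xm_last r k) (xm_pen r k')) (a + e) (last_vec L') \<in> V.span (lower_terms ((k, a) # L))"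
  proof (cases "k = r")
    case True
    have "lgt r (count (letters ((k', a + e) # L'))) (count (letters ((k, a) # L)))"
      using True k L' by (intro lgt_remove_letter[where k = k]) auto
    then show ?thesis
      using True k' L' bracket_xm_last_xm_pen[OF k' k] last_vec_lower_terms[of "(k', a + e) # L'"] by simp
  next
    case False
    have lgt: "lgt r (count (letters L')) (count (letters ((k, a) # L)))"
      using k k' L' by (intro lgt_remove_letters[of _ k k']) auto
    show ?thesis
    proof (cases "k = k'")
      case True
      then show ?thesis
        using False k L' lgt bracket_xm_last_xm_pen[OF k' k] xm_bar_lower_terms[of k k]
        by (simp add: act_msc sp_xm_bar V.span_scale)
    next
      case False': False
      have "act (xm_bar (min k' k) (max k' k)) (a + e) (last_vec L') \<in> V.span (lower_terms ((k, a) # L))"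
        using k k' False L' lgt by (intro xm_bar_lower_terms) auto
      then show ?thesis
        using False False' bracket_xm_last_xm_pen[OF k' k] by simp
    qed
  qed
  ultimately show ?thesis
    using act_commutator[OF sp_xm_last[OF k] sp_xm_pen[OF k']] V.span_add by fastforce
qed

lemma act_xm_last_xm_ij_lower_terms:
  assumes k: "1 \<le> k" "k \<le> r" and k'j: "1 \<le> k'" "k' \<le> j" "j + 1 < r"
    and L': "last_letters L'" "letters L = add_mset k' (letters L')"
  shows "act (xm_last r k) a (act (xm_ij k' j) e (last_vec L')) \<in> V.span (lower_terms ((k, a) # L))"
proof -
  have "act (xm_ij k' j) e (last_vec ((k, a) # L')) \<in> V.span (lower_terms ((k, a) # L))"
    using k k'j L' by (intro xm_ij_lower_terms) (auto simp: add_mset_commute)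
  moreover have "act (bracket r (xm_last r k) (xm_ij k' j)) (a + e) (last_vec L') \<in> V.span (lower_terms ((k, a) # L))"
  proof (cases "k = j + 1")
    case True
    have "lgt r (count (letters ((k', a + e) # L'))) (count (letters ((k, a) # L)))"
      using k L' by (intro lgt_remove_letter[where k = k]) auto
    then show ?thesis
      using True k'j L' bracket_xm_last_xm_ij[OF k'j k] last_vec_lower_terms[of "(k', a + e) # L'"] by simp
  qed (use bracket_xm_last_xm_ij[OF k'j k] in \<open>simp add: V.span_zero\<close>)
  ultimately show ?thesis
    using act_commutator[OF sp_xm_last[OF k] sp_xm_ij[of k' j r]] k'j V.span_add by fastforce
qed

lemma act_xm_last_lower_terms:
  assumes k: "1 \<le> k" "k \<le> r" and v: "v \<in> V.span (lower_terms L)"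
  shows "act (xm_last r k) a v \<in> V.span (lower_terms ((k, a) # L))"
proof (rule linear_into_subspace[OF act_linear[OF sp_xm_last[OF k]] V.subspace_span _ v])
  fix x
  assume "x \<in> lower_terms L"
  then show "act (xm_last r k) a x \<in> V.span (lower_terms ((k, a) # L))"
  proof (cases rule: lower_terms_cases)
    case (last_vec L')
    then show ?thesis
      using k last_vec_lower_terms[of "(k, a) # L'" "(k, a) # L"] by (simp add: lgt_add_mset)
  next
    case (xm_bar a' b e L')
    then have "act (xm_last r k) a x = act (xm_bar a' b) e (last_vec ((k, a) # L'))"
      using k by (simp add: act_commute[OF sp_xm_last sp_xm_bar bracket_xm_last_xm_bar])
    then show ?thesis
      using xm_bar k by (simp only:) (intro xm_bar_lower_terms, auto simp: lgt_add_mset)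
  next
    case (xm_pen k' e L')
    then show ?thesis
      using act_xm_last_xm_pen_lower_terms[OF k] by simp
  next
    case (xm_ij k' j e L')
    then show ?thesis
      using act_xm_last_xm_ij_lower_terms[OF k] by simp
  qed
qed

lemma act_hdiag_lower_terms:
  assumes j: "1 \<le> j" "j \<le> r" and k: "1 \<le> k" "k \<le> r" and L: "last_letters L"
  shows "act (hdiag j) s (last_vec L) \<in> V.span (lower_terms ((k, a) # L))"
proof (rule last_span_subset[OF act_hdiag_last_vec[OF j L] V.subspace_span])
  fix L'
  assume "last_letters L'" "letters L' = letters L \<and> (\<forall>q. degsum L q \<le> degsum L' q)"
  then show "last_vec L' \<in> V.span (lower_terms ((k, a) # L))"
    using k by (intro last_vec_lower_terms lgt_remove_letter[where k = k]) auto
qed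

lemma act_last_vec_lower_terms:
  assumes x: "x \<in> sp r" "x \<in> nplus r"
    and bracket: "\<And>L k a s. 1 \<le> k \<Longrightarrow> k \<le> r \<Longrightarrow> last_letters L \<Longrightarrow>
      act (bracket r x (xm_last r k)) (s + a) (last_vec L) \<in> V.span (lower_terms ((k, a) # L))"
    and L: "last_letters L"
  shows "act x s (last_vec L) \<in> V.span (lower_terms L)"
proof (rule act_last_vec_induct[OF x(1) V.subspace_span _ _ bracket L])
  show "act x s w \<in> V.span (lower_terms [])" for s
    using nplus_kills_w[OF x(2)] by (simp add: V.span_zero)
qed (rule act_xm_last_lower_terms)

lemma bracket_xp_bar_last_lower_terms:
  assumes c: "1 \<le> c" "c < r" and k: "1 \<le> k" "k \<le> r" and L: "last_letters L"
  shows "act (bracket r (xp_bar c r) (xm_last r k)) (s + a) (last_vec L) \<in> V.span (lower_terms ((k, a) # L))"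
proof -
  have exchange: "act x (s + a) (last_vec L) \<in> V.span (lower_terms ((k, a) # L))"
    if "act x (s + a) (last_vec L) \<in> last_span (\<lambda>L L'. add_mset c (letters L') = add_mset k (letters L)) L" for x
  proof (rule last_span_subset[OF that V.subspace_span])
    fix L'
    assume "last_letters L'" "add_mset c (letters L') = add_mset k (letters L)"
    then show "last_vec L' \<in> V.span (lower_terms ((k, a) # L))"
      using c by (intro last_vec_lower_terms lgt_remove_letter[where k = c]) auto
  qed
  consider "k = c" | "k < c" | "c < k" "k < r" | "k = r"
    using c k by linarith
  then show ?thesis
  proof cases
    case 1
    then have "act (bracket r (xp_bar c r) (xm_last r k)) (s + a) (last_vec L) =
        act (hdiag c) (s + a) (last_vec L) + act (hdiag r) (s + a) (last_vec L)"
      using c by (simp add: bracket_xp_bar_last_xm_last act_add_mat sp_hdiag)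
    moreover have "act (hdiag j) (s + a) (last_vec L) \<in> V.span (lower_terms ((k, a) # L))"
      if "j = c \<or> j = r" for j
      using that c k L r_pos by (intro act_hdiag_lower_terms) auto
    ultimately show ?thesis
      using V.span_add by simp
  next
    case 2
    then show ?thesis
      using c k L by (simp add: bracket_xp_bar_last_xm_last xm_ij_lower_terms)
  next
    case 3
    then show ?thesis
      using c k L act_xp_ij_last_vec[of c "k - 1" L "s + a"]
      by (simp add: bracket_xp_bar_last_xm_last exchange)
  next
    case 4
    then show ?thesis
      using c k L act_xp_pen_last_vec[OF c L, of "s + a"] exchange[of "xp_pen r c"]
      by (simp add: bracket_xp_bar_last_xm_last)
  qed
qed

lemma act_xp_bar_last_last_vec:
  assumes c: "1 \<le> c" "c < r" and L: "last_letters L"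
  shows "act (xp_bar c r) s (last_vec L) \<in> V.span (lower_terms L)"
  using c L bracket_xp_bar_last_lower_terms[OF c]
  by (intro act_last_vec_lower_terms sp_xp_bar xp_bar_nplus) auto

lemma act_xp_bar_rr_last_vec:
  assumes L: "last_letters L"
  shows "act (xp_bar r r) s (last_vec L) \<in> V.span (lower_terms L)"
proof (rule act_last_vec_lower_terms[OF sp_xp_bar xp_bar_nplus _ L])
  fix L k a s
  assume k: "1 \<le> k" "k \<le> r" and L: "last_letters L"
  show "act (bracket r (xp_bar r r) (xm_last r k)) (s + a) (last_vec L) \<in> V.span (lower_terms ((k, a) # L))"
    using r_pos k L
    by (cases "k = r") (simp_all add: bracket_xp_bar_rr_xm_last act_hdiag_lower_terms xm_pen_lower_terms)
qed (use r_pos in auto)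

section \<open>Stability of U(n^-_{r-1}[t]) w under g_{r-1}[t]\<close>

abbreviation Uw :: "(idx \<times> idx \<Rightarrow> bool) \<Rightarrow> 'v set" where
  "Uw P \<equiv> U_filt_w r smult act w P"

lemma subspace_Uw: "V.subspace (Uw P)"
  and nminus_red_act_Uw: "y \<in> nminus_red r \<Longrightarrow> u \<in> Uw P \<Longrightarrow> act y e u \<in> Uw P"
  unfolding U_filt_w_def by (rule subspace_gen_sub, rule gen_sub_closed)

lemma gens_subset_Uw: "gens r act w P \<subseteq> Uw P"
  unfolding U_filt_w_def by (rule gen_sub_base)

lemma Uw_subset:
  "gens r act w P \<subseteq> M \<Longrightarrow> V.subspace M \<Longrightarrow> (\<And>y e u. y \<in> nminus_red r \<Longrightarrow> u \<in> M \<Longrightarrow> act y e u \<in> M) \<Longrightarrow>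
   Uw P \<subseteq> M"
  unfolding U_filt_w_def by (rule gen_sub_minimal)

lemma words_in_Uw:
  "pen_letters A \<Longrightarrow> last_letters L \<Longrightarrow> P (wshape A, wshape L) \<Longrightarrow> pen_word A (last_vec L) \<in> Uw P"
  using words_in_gens gens_subset_Uw by blast

(* The Leibniz rule for moving x through a word, stated inside a subspace and under a further
   linear map f, so that the induction can absorb the letters already passed. *)

lemma pen_word_commutator_in_subspace:
  assumes x: "x \<in> sp r" and A: "pen_letters A" and T: "V.subspace T" and f: "Vector_Spaces.linear smult smult f"
    and terms: "\<And>A1 k a A2. A = A1 @ (k, a) # A2 \<Longrightarrow>
      f (pen_word A1 (act (bracket r x (xm_pen r k)) (s + a) (pen_word A2 u))) \<in> T"
  shows "f (act x s (pen_word A u)) - f (pen_word A (act x s u)) \<in> T"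
  using A f terms
proof (induction A arbitrary: f)
  case Nil
  then show ?case
    using V.subspace_0[OF T] by simp
next
  case (Cons p A)
  obtain k a where p: "p = (k, a)"
    by force
  have k: "1 \<le> k" "k < r" and A: "pen_letters A"
    using Cons.prems(1) p by auto
  let ?g = "f \<circ> act (xm_pen r k) a"
  have g: "Vector_Spaces.linear smult smult ?g"
    using Cons.prems(2) act_linear[OF sp_xm_pen[OF k]] by (rule Vector_Spaces.linear_compose[rotated])
  have "?g (act x s (pen_word A u)) - ?g (pen_word A (act x s u)) \<in> T"
  proof (rule Cons.IH[OF A g])
    fix A1 k' a' A2
    assume "A = A1 @ (k', a') # A2"
    then show "?g (pen_word A1 (act (bracket r x (xm_pen r k')) (s + a') (pen_word A2 u))) \<in> T"
      using Cons.prems(3)[of "(k, a) # A1"] p by simp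
  qed
  moreover have "f (act (bracket r x (xm_pen r k)) (s + a) (pen_word A u)) \<in> T"
    using Cons.prems(3)[of "[]"] p by simp
  moreover have "f (act x s (pen_word (p # A) u)) =
      ?g (act x s (pen_word A u)) + f (act (bracket r x (xm_pen r k)) (s + a) (pen_word A u))"
    using act_commutator[OF x sp_xm_pen[OF k]] VV.linear_add[OF Cons.prems(2)] p by simp
  ultimately show ?case
    using V.subspace_add[OF T] p by (fastforce simp: algebra_simps)
qed

lemma pen_word_xm_ij_in_Uw:
  assumes P: "upward_closed r P" "P (q, wshape L)"
    and kj: "1 \<le> k" "k \<le> j" "j + 1 < r" and A: "pen_letters A"
    and L': "last_letters L'" "lgt r (count (letters L')) (count (letters L))"
  shows "pen_word A (act (xm_ij k j) e (last_vec L')) \<in> Uw P"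
proof -
  have y: "xm_ij k j \<in> sp r" "xm_ij k j \<in> nminus_red r"
    using kj by (auto intro: sp_xm_ij xm_ij_nminus_red)
  have words: "pen_word A' (last_vec L') \<in> Uw P" if "pen_letters A'" for A'
    using words_in_Uw[OF that L'(1)] upward_closed_lgt[OF P L'(2)] by blast
  have "act (xm_ij k j) e (pen_word A (last_vec L')) - pen_word A (act (xm_ij k j) e (last_vec L')) \<in> Uw P"
  proof (rule pen_word_commutator_in_subspace[OF y(1) A subspace_Uw V.linear_id[unfolded id_def]])
    fix A1 k' a A2
    assume A12: "A = A1 @ (k', a) # A2"
    show "pen_word A1 (act (bracket r (xm_ij k j) (xm_pen r k')) (e + a) (pen_word A2 (last_vec L'))) \<in> Uw P"
    proof (cases "k' = j + 1")
      case True
      then have "pen_word A1 (act (bracket r (xm_ij k j) (xm_pen r k')) (e + a) (pen_word A2 (last_vec L'))) =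
          smult (-1) (pen_word (A1 @ (k, e + a) # A2) (last_vec L'))"
        using kj A A12 by (simp add: bracket_xm_ij_xm_pen act_msc sp_xm_pen act_word_append
            VV.linear_neg[OF linear_pen_word])
      then show ?thesis
        using words[of "A1 @ (k, e + a) # A2"] kj A A12 V.subspace_neg[OF subspace_Uw] by simp
    next
      case False
      then show ?thesis
        using kj A A12 by (simp add: bracket_xm_ij_xm_pen VV.linear_0[OF linear_pen_word] V.subspace_0[OF subspace_Uw])
    qed
  qed
  moreover have "act (xm_ij k j) e (pen_word A (last_vec L')) \<in> Uw P"
    using nminus_red_act_Uw[OF y(2) words[OF A]] .
  ultimately show ?thesis
    using V.subspace_diff[OF subspace_Uw] by fastforce
qed

lemma pen_word_lower_terms_in_Uw:
  assumes P: "upward_closed r P" "P (q, wshape L)" and A: "pen_letters A" and v: "v \<in> V.span (lower_terms L)"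
  shows "pen_word A v \<in> Uw P"
proof (rule linear_into_subspace[OF linear_pen_word[OF A] subspace_Uw _ v])
  fix x
  assume "x \<in> lower_terms L"
  then show "pen_word A x \<in> Uw P"
  proof (cases rule: lower_terms_cases)
    case (last_vec L')
    then show ?thesis
      using words_in_Uw[OF A] upward_closed_lgt[OF P] by simp
  next
    case (xm_bar a b e L')
    have "pen_word A x = act (xm_bar a b) e (pen_word A (last_vec L'))"
      unfolding xm_bar(1) using A xm_bar
      by (intro act_word_commute_letter act_commute sp_xm_pen sp_xm_bar bracket_xm_pen_xm_bar)
        (auto simp: pen_letters_def)
    moreover have "pen_word A (last_vec L') \<in> Uw P"
      using words_in_Uw[OF A] upward_closed_lgt[OF P] xm_bar by simp
    ultimately show ?thesis
      using nminus_red_act_Uw xm_bar_nminus_red xm_bar by simp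
  next
    case (xm_pen k e L')
    have "pen_word A x = pen_word (A @ [(k, e)]) (last_vec L')"
      using xm_pen by (simp add: act_word_append)
    moreover have "lgt r (count (letters L')) (count (letters L))"
      using xm_pen by (intro lgt_remove_letter[where k = k]) auto
    ultimately show ?thesis
      using xm_pen A words_in_Uw upward_closed_lgt[OF P] by simp
  next
    case (xm_ij k j e L')
    moreover have "lgt r (count (letters L')) (count (letters L))"
      using xm_ij by (intro lgt_remove_letter[where k = k]) auto
    ultimately show ?thesis
      using pen_word_xm_ij_in_Uw[OF P _ _ _ A] by simp
  qed
qed

lemma pen_word_last_span_in_Uw:
  assumes P: "upward_closed r P" "P (wshape A, wshape L)" and A: "pen_letters A"
    and v: "v \<in> last_span R L"
    and R: "\<And>L'. R L L' \<Longrightarrow> IIge r (wshape A, wshape L') (wshape A, wshape L)"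
  shows "pen_word A v \<in> Uw P"
  by (rule last_span_into[OF v linear_pen_word[OF A] subspace_Uw])
    (use words_in_Uw[OF A] upward_closedD[OF P(1) R P(2)] in blast)

lemma pen_word_act_borel_last_vec_in_Uw:
  assumes P: "upward_closed r P" "P (wshape A, wshape L)"
    and A: "pen_letters A" and L: "last_letters L" and x: "x \<in> borel_red r"
  shows "pen_word A (act x s (last_vec L)) \<in> Uw P"
  using x
proof (cases rule: borel_red_cases)
  case (hdiag j)
  then show ?thesis
    unfolding hdiag(1) using L
    by (intro pen_word_last_span_in_Uw[OF P A act_hdiag_last_vec] IIge_sndI Igt_or_Ieq_of_le)
      (auto simp: wshape_def)
next
  case (xp_ij a b)
  have "lgt r (count (letters L')) (count (letters L))"
    if "add_mset a (letters L') = add_mset (b + 1) (letters L)" for L'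
    using xp_ij that by (intro lgt_multiset[of _ "{#a#}" _ "{#b + 1#}"]) auto
  then show ?thesis
    unfolding xp_ij(1) using xp_ij L
    by (intro pen_word_last_span_in_Uw[OF P A act_xp_ij_last_vec] IIge_lgtI) (auto simp: wshape_def)
next
  case (xp_bar a b)
  then show ?thesis
    unfolding xp_bar(1) using L
    by (intro pen_word_last_span_in_Uw[OF P A act_xp_bar_last_vec] IIge_lgtI) (auto simp: wshape_def)
qed

lemma pen_word_xp_bar_rr_in_Uw:
  assumes P: "upward_closed r P" "P (q, wshape L)"
    and A: "pen_letters A" "pen_letters B" and L: "last_letters L"
  shows "pen_word A (act (xp_bar r r) e (pen_word B (last_vec L))) \<in> Uw P"
proof -
  have "act (xp_bar r r) e (pen_word B (last_vec L)) = pen_word B (act (xp_bar r r) e (last_vec L))"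
    using A(2) r_pos
    by (intro act_word_commute_letter[symmetric] act_commute sp_xp_bar sp_xm_pen bracket_xm_pen_xp_bar_rr)
      (auto simp: pen_letters_def)
  moreover have "pen_word (A @ B) (act (xp_bar r r) e (last_vec L)) \<in> Uw P"
    using A by (intro pen_word_lower_terms_in_Uw[OF P] act_xp_bar_rr_last_vec L) auto
  ultimately show ?thesis
    by (simp add: act_word_append)
qed

lemma pen_word_xp_bar_last_in_Uw:
  assumes P: "upward_closed r P" "P (q, wshape L)" and c: "1 \<le> c" "c < r"
    and A: "pen_letters A1" "pen_letters A2" and L: "last_letters L"
  shows "pen_word A1 (act (xp_bar c r) e (pen_word A2 (last_vec L))) \<in> Uw P"
proof -
  have "pen_word A1 (act (xp_bar c r) e (pen_word A2 (last_vec L))) -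
      pen_word A1 (pen_word A2 (act (xp_bar c r) e (last_vec L))) \<in> Uw P"
  proof (rule pen_word_commutator_in_subspace[OF sp_xp_bar A(2) subspace_Uw linear_pen_word[OF A(1)]])
    show "1 \<le> c" "c \<le> r" "r \<le> r"
      using c by auto
    fix B1 k a B2
    assume B: "A2 = B1 @ (k, a) # B2"
    have "pen_word A1 (pen_word B1 (act (xp_bar r r) (e + a) (pen_word B2 (last_vec L)))) \<in> Uw P"
      using A B by (intro pen_word_xp_bar_rr_in_Uw[OF P _ _ L, of "A1 @ B1", simplified act_word_append]) auto
    then show "pen_word A1 (pen_word B1 (act (bracket r (xp_bar c r) (xm_pen r k)) (e + a)
        (pen_word B2 (last_vec L)))) \<in> Uw P"
      using c A B V.subspace_scale[OF subspace_Uw] V.subspace_neg[OF subspace_Uw] V.subspace_0[OF subspace_Uw]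
      by (simp add: bracket_xp_bar_last_xm_pen act_msc sp_xp_bar VV.linear_0[OF linear_pen_word]
          VV.linear_scale[OF linear_pen_word] VV.linear_neg[OF linear_pen_word])
  qed
  moreover have "pen_word A1 (pen_word A2 (act (xp_bar c r) e (last_vec L))) \<in> Uw P"
    using pen_word_lower_terms_in_Uw[OF P _ act_xp_bar_last_last_vec[OF c L], of "A1 @ A2"] A
    by (simp add: act_word_append)
  ultimately show ?thesis
    using V.subspace_add[OF subspace_Uw] by fastforce
qed

lemma pen_word_bracket_term_in_Uw:
  assumes P: "upward_closed r P" "P (wshape A, wshape L)" and x: "x \<in> borel_red r"
    and A: "A = A1 @ (k, a) # A2" "pen_letters A" and L: "last_letters L"
  shows "pen_word A1 (act (bracket r x (xm_pen r k)) (s + a) (pen_word A2 (last_vec L))) \<in> Uw P"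
proof -
  have A12: "pen_letters A1" "pen_letters A2" and k: "1 \<le> k" "k < r"
    using A by auto
  have raised: "pen_word A1 (act (bracket r x (xm_pen r k)) (s + a) (pen_word A2 (last_vec L))) \<in> Uw P"
    if br: "bracket r x (xm_pen r k) = msc (-1) (xm_pen r k')" and k': "1 \<le> k'" "k' < r"
      and ge: "IIge r (wshape (A1 @ (k', s + a) # A2), wshape L) (wshape A, wshape L)" for k'
  proof -
    have "pen_word (A1 @ (k', s + a) # A2) (last_vec L) \<in> Uw P"
      using words_in_Uw upward_closedD[OF P(1) ge P(2)] A12 k' L by simp
    then show ?thesis
      using br k' A12 V.subspace_neg[OF subspace_Uw]
      by (simp add: act_msc sp_xm_pen act_word_append VV.linear_neg[OF linear_pen_word])
  qed
  have vanishing: "pen_word A1 (act 0 (s + a) (pen_word A2 (last_vec L))) \<in> Uw P"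
    using A12 by (simp add: VV.linear_0[OF linear_pen_word] V.subspace_0[OF subspace_Uw])
  from x show ?thesis
  proof (cases rule: borel_red_cases)
    case (hdiag j)
    have "IIge r (wshape (A1 @ (k, s + a) # A2), wshape L) (wshape A, wshape L)"
      using A by (intro IIge_fstI Igt_or_Ieq_of_le) (auto simp: wshape_def degsum_append)
    then show ?thesis
      using hdiag k raised[of k] vanishing by (simp add: bracket_hdiag_xm_pen)
  next
    case (xp_ij a' b)
    have "lgt (r - 1) (count (letters (A1 @ (b + 1, s + a) # A2))) (count (letters A))" if "k = a'"
      using A xp_ij that by (intro lgt_multiset[of _ "{#a'#}" _ "{#b + 1#}"]) auto
    then have "IIge r (wshape (A1 @ (b + 1, s + a) # A2), wshape L) (wshape A, wshape L)" if "k = a'"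
      using that by (intro IIge_fstI) (simp add: Igt_def wshape_def)
    then show ?thesis
      using xp_ij k raised[of "b + 1"] vanishing by (auto simp: bracket_xp_ij_xm_pen)
  next
    case (xp_bar a' b)
    have "pen_word A1 (act (msc (-1) (xp_bar c r)) (s + a) (pen_word A2 (last_vec L))) \<in> Uw P"
      if "1 \<le> c" "c < r" for c
      using pen_word_xp_bar_last_in_Uw[OF P that A12 L] V.subspace_neg[OF subspace_Uw] that A12
      by (simp add: act_msc sp_xp_bar VV.linear_neg[OF linear_pen_word])
    then show ?thesis
      using xp_bar k vanishing by (auto simp: bracket_xp_bar_xm_pen)
  qed
qed

lemma borel_act_words_in_Uw:
  assumes P: "upward_closed r P" "P (wshape A, wshape L)"
    and A: "pen_letters A" and L: "last_letters L" and x: "x \<in> borel_red r"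
  shows "act x s (pen_word A (last_vec L)) \<in> Uw P"
proof -
  have "act x s (pen_word A (last_vec L)) - pen_word A (act x s (last_vec L)) \<in> Uw P"
    using pen_word_bracket_term_in_Uw[OF P x _ A L]
    by (intro pen_word_commutator_in_subspace[OF g_red_sp[OF borel_red_g_red[OF x]] A subspace_Uw V.linear_id[unfolded id_def]])
  moreover have "pen_word A (act x s (last_vec L)) \<in> Uw P"
    by (rule pen_word_act_borel_last_vec_in_Uw[OF P A L x])
  ultimately show ?thesis
    using V.subspace_add[OF subspace_Uw] by fastforce
qed

lemma g_red_act_Uw:
  assumes u: "u \<in> Uw P" and borel: "\<And>x s. x \<in> borel_red r \<Longrightarrow> act x s u \<in> Uw P"
    and z: "z \<in> g_red r"
  shows "act z t u \<in> Uw P"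
proof -
  let ?Z = "{z \<in> sp r. \<forall>t. act z t u \<in> Uw P}"
  have "module.subspace msc ?Z"
    unfolding module.subspace_def[OF module_msc]
    using sp_zero sp_add sp_msc act_add_mat act_msc V.subspace_0[OF subspace_Uw]
      V.subspace_add[OF subspace_Uw] V.subspace_scale[OF subspace_Uw]
    by auto
  moreover have "borel_red r \<union> nminus_red r \<subseteq> ?Z"
    using borel u nminus_red_act_Uw g_red_sp borel_red_g_red nminus_red_subset_g_red by blast
  ultimately have "mspan (borel_red r \<union> nminus_red r) \<subseteq> ?Z"
    unfolding mspan_def by (rule module.span_minimal[OF module_msc, rotated])
  then show ?thesis
    using g_red_subset_mspan z by blast
qed

lemma borel_act_nminus_red_act_Uw:
  assumes u: "u \<in> Uw P" and borel: "\<And>x s. x \<in> borel_red r \<Longrightarrow> act x s u \<in> Uw P"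
    and y: "y \<in> nminus_red r" and x: "x \<in> borel_red r"
  shows "act x s (act y e u) \<in> Uw P"
proof -
  have y_g_red: "y \<in> g_red r"
    using y nminus_red_subset_g_red by blast
  have "act x s (act y e u) = act y e (act x s u) + act (bracket r x y) (s + e) u"
    by (rule act_commutator[OF g_red_sp[OF borel_red_g_red[OF x]] g_red_sp[OF y_g_red]])
  moreover have "act y e (act x s u) \<in> Uw P"
    using nminus_red_act_Uw[OF y borel[OF x]] .
  moreover have "act (bracket r x y) (s + e) u \<in> Uw P"
    using g_red_act_Uw[OF u borel g_red_bracket[OF borel_red_g_red[OF x] y_g_red]] .
  ultimately show ?thesis
    using V.subspace_add[OF subspace_Uw] by simp
qed

lemma borel_act_Uw:
  assumes P: "upward_closed r P" and u: "u \<in> Uw P" and x: "x \<in> borel_red r"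
  shows "act x s u \<in> Uw P"
proof -
  let ?N = "{u \<in> Uw P. \<forall>x\<in>borel_red r. \<forall>s. act x s u \<in> Uw P}"
  have "Uw P \<subseteq> ?N"
  proof (rule Uw_subset)
    show "gens r act w P \<subseteq> ?N"
    proof
      fix g
      assume g: "g \<in> gens r act w P"
      then obtain A L where "pen_letters A" "last_letters L" "P (wshape A, wshape L)" "g = pen_word A (last_vec L)"
        using gens_cases[OF _ P] by blast
      then show "g \<in> ?N"
        using g gens_subset_Uw borel_act_words_in_Uw[OF P] by blast
    qed
    show "V.subspace ?N"
      using V.subspace_0[OF subspace_Uw] V.subspace_add[OF subspace_Uw] V.subspace_scale[OF subspace_Uw]
      unfolding V.subspace_def
      by (auto simp: VV.linear_0 VV.linear_add VV.linear_scale act_linear g_red_sp borel_red_g_red)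
    show "act y e v \<in> ?N" if "y \<in> nminus_red r" "v \<in> ?N" for y e v
      using that nminus_red_act_Uw borel_act_nminus_red_act_Uw by blast
  qed
  then show ?thesis
    using u x by blast
qed

lemma W_filt_eq_U_filt_w:
  assumes "upward_closed r P"
  shows "W_filt r smult act w P = Uw P"
proof
  show "W_filt r smult act w P \<subseteq> Uw P"
    unfolding W_filt_def
  proof (rule gen_sub_minimal[OF _ subspace_Uw])
    show "gens r act w P \<subseteq> Uw P"
      by (rule gens_subset_Uw)
    show "act z s u \<in> Uw P" if "z \<in> g_red r" "u \<in> Uw P" for z s u
      using that borel_act_Uw[OF assms] g_red_act_Uw by blast
  qed
  show "Uw P \<subseteq> W_filt r smult act w P"
    unfolding W_filt_def U_filt_w_def
    using nminus_red_subset_g_red by (intro gen_sub_minimal gen_sub_base subspace_gen_sub) (auto intro: gen_sub_closed)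
qed

end

theorem proposition4p3:
  fixes r :: nat and m :: "nat \<Rightarrow> nat"
    and smult :: "complex \<Rightarrow> 'v::ab_group_add \<Rightarrow> 'v"
    and act :: "mat \<Rightarrow> nat \<Rightarrow> 'v \<Rightarrow> 'v" and w :: 'v
    and i' i :: idx
  assumes "1 \<le> r"
    and "is_rep r smult act"
    and "weyl_vec r m smult act w"
  shows "W_filt r smult act w (\<lambda>p. IIge r p (i', i)) = U_filt_w r smult act w (\<lambda>p. IIge r p (i', i)) \<and>
         W_filt r smult act w (\<lambda>p. IIgt r p (i', i)) = U_filt_w r smult act w (\<lambda>p. IIgt r p (i', i))"
proof -
  interpret weyl_vector r m smult act w
    using assms by unfold_locales
  show ?thesis
    using W_filt_eq_U_filt_w upward_closed_IIge upward_closed_IIgt by blast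
qed

end
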